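(* Let $T>0$, $\tau>0$, $H\in(1/2,1)$, and let $B^H=\{B^H(t):t\in[0,T]\}$ be a fractional Brownian motion with Hurst parameter $H$ on a complete probability space $(\Omega,\mathcal F,P)$. Let $\lambda\in(1/2,H)$, let $\xi\in C^\lambda([-\tau,0];\mathbb{R})$, and let $f:C^\lambda([-\tau,0];\mathbb{R})\to\mathbb{R}$ satisfy: (A) there is $M_1>0$ with $|f(\psi_2)-f(\psi_1)|\le M_1\|\psi_2-\psi_1\|_{[-\tau,0]}$ for all $\psi_1,\psi_2\in C^\lambda([-\tau,0];\mathbb{R})$; (B) for every $0\le a_1<a_2\le T$, every $\rho\in C^\lambda([a_1-\tau,a_1];\mathbb{R})$ and every $N\ge1$ there is $c_N>0$ such that $\|\mathcal U(Z)-\mathcal U(W)\|_{\lambda,[a_1,a_2]}\le c_N\|Z-W\|_{\lambda,[a_1-\tau,a_2]}$ for all $Z,W\in C^\lambda_{\rho,a_1,a_2}(\mathbb{R})$ with $\max\{\|Z\|_{\lambda,[a_1-\tau,a_2]},\|W\|_{\lambda,[a_1-\tau,a_2]}\}\le N$, where $\mathcal U(Z)(s)=f(\overline Z_s)$, $s\in[a_1,a_2]$. Then (pathwise, for every $\omega$ such that $B^H(\omega,\cdot)$ is $\gamma$-Hölder continuous on $[0,T]$ for some $\gamma\in(\lambda,H)$, which holds almost surely) the equation $$X(t)=\xi(0)+\int_0^t f(\overline X_s)\,dB^H(s),\ t\in[0,T],\qquad \overline X_0=\xi,$$ has a unique solution $X$ in $C^\lambda_{\xi,0,T}(\mathbb{R})$.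 Furthermore, for all $0\le s\le t\le T$, $$X(t)-X(s)=f(\overline X_s)\,(B^H(t)-B^H(s))+R^X(s,t),$$ where $|R^X(s,t)|\le C_X|t-s|^{2\lambda}$ for some positive constant $C_X$.
   Context: For an interval $[a,b]$ and $\mu\in(0,1)$, $C^\mu([a,b];\mathbb{R})$ is the set of $\mu$-Hölder continuous functions with seminorm $\|\phi\|_{\mu,[a,b]}=\sup_{x\ne y\in[a,b]}|\phi(x)-\phi(y)|/|x-y|^\mu$, and $\|\phi\|_{[a,b]}=\sup_{x\in[a,b]}|\phi(x)|$ is the supremum norm. For $0\le a_1<a_2$ and $\rho\in C^\mu([a_1-\tau,a_1];\mathbb{R})$, $C^\mu_{\rho,a_1,a_2}(\mathbb{R})=\{\zeta\in C^\mu([a_1-\tau,a_2];\mathbb{R}):\zeta=\rho\text{ on }[a_1-\tau,a_1]\}$, with the metric $\|\zeta_1-\zeta_2\|_{\mu,[a_1-\tau,a_2]}$. For a function $Z$ defined on $[a_1-\tau,a_2]$ and $s\in[a_1,a_2]$, the segment $\overline Z_s:[-\tau,0]\to\mathbb{R}$ is $\overline Z_s(\theta)=Z(s+\theta)$. The stochastic integral is the pathwise Young integral: for $h\in C^\alpha$, $g\in C^\beta$ with $\alpha+\beta>1$, $\int_s^t h\,dg$ is the limit of Riemann sums $\sum h(r_i)(g(r_{i+1})-g(r_i))$ as the mesh of the partition of $[s,t]$ tends to zero. A solution in $C^\lambda_{\xi,0,T}(\mathbb{R})$ is a function $X\in C^\lambda([-\tau,T];\mathbb{R})$ with $X=\xi$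 on $[-\tau,0]$ satisfying the integral equation. *)

theory Defs
  imports "HOL-Probability.Probability"
begin

definition holder_on :: "real \<Rightarrow> real \<Rightarrow> real \<Rightarrow> (real \<Rightarrow> real) \<Rightarrow> bool" where
  "holder_on \<mu> a b \<phi> \<longleftrightarrow> (\<exists>C. \<forall>x\<in>{a..b}. \<forall>y\<in>{a..b}. \<bar>\<phi> x - \<phi> y\<bar> \<le> C * \<bar>x - y\<bar> powr \<mu>)"

definition holder_semi :: "real \<Rightarrow> real \<Rightarrow> real \<Rightarrow> (real \<Rightarrow> real) \<Rightarrow> real" where
  "holder_semi \<mu> a b \<phi> =
     (SUP p\<in>{(x,y). x \<in> {a..b} \<and> y \<in> {a..b} \<and> x \<noteq> y}.
        \<bar>\<phi> (fst p) - \<phi> (snd p)\<bar> / \<bar>fst p - snd p\<bar> powr \<mu>)"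

definition sup_norm :: "real \<Rightarrow> real \<Rightarrow> (real \<Rightarrow> real) \<Rightarrow> real" where
  "sup_norm a b \<phi> = (SUP x\<in>{a..b}. \<bar>\<phi> x\<bar>)"

definition holder_rho :: "real \<Rightarrow> real \<Rightarrow> (real \<Rightarrow> real) \<Rightarrow> real \<Rightarrow> real \<Rightarrow> (real \<Rightarrow> real) set" where
  "holder_rho \<mu> \<tau> \<rho> a1 a2 =
     {\<zeta>. holder_on \<mu> (a1 - \<tau>) a2 \<zeta> \<and> (\<forall>x\<in>{a1 - \<tau>..a1}. \<zeta> x = \<rho> x)}"

(* segment  bar Z_s (theta) = Z(s+theta) on [-tau,0]; normalised to 0 outside [-tau,0] *)
definition seg :: "real \<Rightarrow> (real \<Rightarrow> real) \<Rightarrow> real \<Rightarrow> real \<Rightarrow> real" where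
  "seg \<tau> Z s = (\<lambda>\<theta>. if \<theta> \<in> {-\<tau>..0} then Z (s + \<theta>) else 0)"

definition is_partition :: "real \<Rightarrow> real \<Rightarrow> real list \<Rightarrow> bool" where
  "is_partition s t p \<longleftrightarrow> p \<noteq> [] \<and> hd p = s \<and> last p = t \<and> sorted_wrt (<) p"

definition mesh_less :: "real list \<Rightarrow> real \<Rightarrow> bool" where
  "mesh_less p \<delta> \<longleftrightarrow> (\<forall>i < length p - 1. p ! (Suc i) - p ! i < \<delta>)"

definition riemann_sum :: "(real \<Rightarrow> real) \<Rightarrow> (real \<Rightarrow> real) \<Rightarrow> real list \<Rightarrow> real" where
  "riemann_sum h g p = (\<Sum>i < length p - 1. h (p ! i) * (g (p ! Suc i) - g (p ! i)))"

definition has_young_integral :: "(real \<Rightarrow> real) \<Rightarrow> (real \<Rightarrow> real) \<Rightarrow> real \<Rightarrow> real \<Rightarrow> real \<Rightarrow> bool" where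
  "has_young_integral h g s t I \<longleftrightarrow>
     (\<forall>\<epsilon>>0. \<exists>\<delta>>0. \<forall>p. is_partition s t p \<and> mesh_less p \<delta> \<longrightarrow> \<bar>riemann_sum h g p - I\<bar> < \<epsilon>)"

definition is_solution ::
  "real \<Rightarrow> real \<Rightarrow> real \<Rightarrow> ((real \<Rightarrow> real) \<Rightarrow> real) \<Rightarrow> (real \<Rightarrow> real) \<Rightarrow> (real \<Rightarrow> real) \<Rightarrow> (real \<Rightarrow> real) \<Rightarrow> bool" where
  "is_solution lam \<tau> T f \<xi> b X \<longleftrightarrow>
     X \<in> holder_rho lam \<tau> \<xi> 0 T \<and>
     (\<forall>t\<in>{0..T}. has_young_integral (\<lambda>s. f (seg \<tau> X s)) b 0 t (X t - \<xi> 0))"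

definition fbm_cov :: "real \<Rightarrow> real \<Rightarrow> real \<Rightarrow> real" where
  "fbm_cov H s t = (s powr (2*H) + t powr (2*H) - \<bar>t - s\<bar> powr (2*H)) / 2"

definition centered_gaussian :: "'a measure \<Rightarrow> ('a \<Rightarrow> real) \<Rightarrow> real \<Rightarrow> bool" where
  "centered_gaussian M X v \<longleftrightarrow> X \<in> borel_measurable M \<and>
     distr M lborel X = (if v = 0 then return lborel 0 else density lborel (normal_density 0 (sqrt v)))"

definition is_fbm :: "'a measure \<Rightarrow> real \<Rightarrow> real \<Rightarrow> ('a \<Rightarrow> real \<Rightarrow> real) \<Rightarrow> bool" where
  "is_fbm M H T B \<longleftrightarrow>
     (\<forall>t\<in>{0..T}. (\<lambda>\<omega>. B \<omega> t) \<in> borel_measurable M) \<and>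
     (\<forall>(n::nat) (ts::nat \<Rightarrow> real) (c::nat \<Rightarrow> real). (\<forall>i<n. ts i \<in> {0..T}) \<longrightarrow>
        centered_gaussian M (\<lambda>\<omega>. \<Sum>i<n. c i * B \<omega> (ts i))
          (\<Sum>i<n. \<Sum>j<n. c i * c j * fbm_cov H (ts i) (ts j)))"

end

theory Submission
  imports Defs
begin

text \<open>The integral is a Young integral: for \<open>g\<close> \<open>lam\<close>-Hoelder and \<open>b\<close> \<open>gam\<close>-Hoelder with
  \<open>lam + gam > 1\<close> the Riemann sums converge, and the Young--Loeve estimate bounds
  \<open>\<integral>\<^sub>s\<^sup>t g db - g(s) (b(t) - b(s))\<close> by \<open>C |t - s| powr (lam + gam)\<close>. Conversely, by the
  sewing lemma, a path whose increments have such a local expansion with germ \<open>g\<close> is an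
  indefinite Young integral of \<open>g\<close>. So solutions are exactly the paths with initial segment \<open>\<xi>\<close>
  whose increments are \<open>f(X\<^sub>s) (b(t) - b(s))\<close> up to \<open>O(|t - s| powr (lam + gam))\<close>, which also
  gives the remainder bound.

  Hypothesis (A) bounds the Hoelder constant of \<open>s \<mapsto> f(X\<^sub>s)\<close>; this yields an a priori bound on
  the Hoelder constant of every solution, since on a short step that constant improves itself.
  With this bound fixed, hypothesis (B) makes the Picard map \<open>Z \<mapsto> X(a) + \<integral>\<^sub>a f(Z\<^sub>s) db\<close> on
  \<open>[a, a + h]\<close> Lipschitz in the Hoelder seminorm with a constant of order \<open>h powr gam\<close>. Hence one
  step length \<open>h\<close> works throughout: the solution is built by contraction on finitely many
  intervals of length \<open>h\<close>, and two solutions that agree up to time \<open>s\<close> agree up to \<open>s + h\<close>.\<close>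

section \<open>Hoelder constants\<close>

definition holder_with :: "real \<Rightarrow> real \<Rightarrow> real \<Rightarrow> real \<Rightarrow> (real \<Rightarrow> real) \<Rightarrow> bool" where
  "holder_with \<mu> K a b \<phi> \<longleftrightarrow> (\<forall>x\<in>{a..b}. \<forall>y\<in>{a..b}. \<bar>\<phi> x - \<phi> y\<bar> \<le> K * \<bar>x - y\<bar> powr \<mu>)"

lemma holder_on_iff_holder_with: "holder_on \<mu> a b \<phi> \<longleftrightarrow> (\<exists>K. holder_with \<mu> K a b \<phi>)"
  unfolding holder_on_def holder_with_def ..

lemma holder_withD:
  "holder_with \<mu> K a b \<phi> \<Longrightarrow> x \<in> {a..b} \<Longrightarrow> y \<in> {a..b} \<Longrightarrow> \<bar>\<phi> x - \<phi> y\<bar> \<le> K * \<bar>x - y\<bar> powr \<mu>"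
  unfolding holder_with_def by auto

lemma holder_withI:
  assumes "\<And>u v. a \<le> u \<Longrightarrow> u \<le> v \<Longrightarrow> v \<le> b \<Longrightarrow> \<bar>\<phi> v - \<phi> u\<bar> \<le> K * (v - u) powr \<mu>"
  shows "holder_with \<mu> K a b \<phi>"
  unfolding holder_with_def
proof (intro ballI)
  fix x y assume xy: "x \<in> {a..b}" "y \<in> {a..b}"
  show "\<bar>\<phi> x - \<phi> y\<bar> \<le> K * \<bar>x - y\<bar> powr \<mu>"
  proof (cases "x \<le> y")
    case True
    then show ?thesis using assms[of x y] xy by (simp add: abs_minus_commute)
  next
    case False
    then show ?thesis using assms[of y x] xy by simp
  qed
qed

lemma holder_with_mono: "holder_with \<mu> K a b \<phi> \<Longrightarrow> K \<le> K' \<Longrightarrow> holder_with \<mu> K' a b \<phi>"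
  unfolding holder_with_def by (meson mult_right_mono order_trans powr_ge_zero)

lemma holder_with_subinterval:
  "holder_with \<mu> K a b \<phi> \<Longrightarrow> a \<le> a' \<Longrightarrow> b' \<le> b \<Longrightarrow> holder_with \<mu> K a' b' \<phi>"
  unfolding holder_with_def by auto

lemma holder_with_cong:
  "holder_with \<mu> K a b \<phi> \<Longrightarrow> (\<And>x. x \<in> {a..b} \<Longrightarrow> \<psi> x = \<phi> x) \<Longrightarrow> holder_with \<mu> K a b \<psi>"
  unfolding holder_with_def by auto

lemma holder_with_const: "(\<And>x. x \<in> {a..b} \<Longrightarrow> \<phi> x = C) \<Longrightarrow> holder_with \<mu> 0 a b \<phi>"
  unfolding holder_with_def by auto

lemma holder_with_add:
  assumes "holder_with \<mu> K1 a b \<phi>" and "holder_with \<mu> K2 a b \<psi>"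
  shows "holder_with \<mu> (K1 + K2) a b (\<lambda>x. \<phi> x + \<psi> x)"
  unfolding holder_with_def
proof (intro ballI)
  fix x y assume xy: "x \<in> {a..b}" "y \<in> {a..b}"
  have "\<bar>\<phi> x + \<psi> x - (\<phi> y + \<psi> y)\<bar> \<le> \<bar>\<phi> x - \<phi> y\<bar> + \<bar>\<psi> x - \<psi> y\<bar>" by linarith
  also have "\<dots> \<le> K1 * \<bar>x - y\<bar> powr \<mu> + K2 * \<bar>x - y\<bar> powr \<mu>"
    using holder_withD[OF assms(1) xy] holder_withD[OF assms(2) xy] by linarith
  finally show "\<bar>\<phi> x + \<psi> x - (\<phi> y + \<psi> y)\<bar> \<le> (K1 + K2) * \<bar>x - y\<bar> powr \<mu>"
    by (simp add: distrib_right)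
qed

lemma holder_with_minus: "holder_with \<mu> K a b \<phi> \<Longrightarrow> holder_with \<mu> K a b (\<lambda>x. - \<phi> x)"
  unfolding holder_with_def by (simp add: abs_minus_commute)

lemma holder_with_diff:
  assumes "holder_with \<mu> K1 a b \<phi>" and "holder_with \<mu> K2 a b \<psi>"
  shows "holder_with \<mu> (K1 + K2) a b (\<lambda>x. \<phi> x - \<psi> x)"
  using holder_with_add[OF assms(1) holder_with_minus[OF assms(2)]] by simp

lemma holder_with_concat:
  assumes h1: "holder_with \<mu> K1 p q \<phi>" and h2: "holder_with \<mu> K2 q r \<phi>"
    and K: "0 \<le> K1" "0 \<le> K2" and mu: "0 \<le> \<mu>" and pqr: "p \<le> q" "q \<le> r"
  shows "holder_with \<mu> (K1 + K2) p r \<phi>"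
proof (rule holder_withI)
  fix u v assume uv: "p \<le> u" "u \<le> v" "v \<le> r"
  have A: "K1 * (v - u) powr \<mu> \<le> (K1 + K2) * (v - u) powr \<mu>"
    and B: "K2 * (v - u) powr \<mu> \<le> (K1 + K2) * (v - u) powr \<mu>"
    using K by (simp_all add: mult_right_mono)
  consider "v \<le> q" | "q \<le> u" | "u < q" "q < v" by linarith
  then show "\<bar>\<phi> v - \<phi> u\<bar> \<le> (K1 + K2) * (v - u) powr \<mu>"
  proof cases
    case 1
    then show ?thesis using holder_withD[OF h1, of v u] uv A by auto
  next
    case 2
    then show ?thesis using holder_withD[OF h2, of v u] uv B by auto
  next
    case 3
    have "\<bar>\<phi> q - \<phi> u\<bar> \<le> K1 * (q - u) powr \<mu>" using holder_withD[OF h1, of q u] uv pqr 3 by auto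
    moreover have "\<bar>\<phi> v - \<phi> q\<bar> \<le> K2 * (v - q) powr \<mu>" using holder_withD[OF h2, of v q] uv pqr 3 by auto
    moreover have "K1 * (q - u) powr \<mu> \<le> K1 * (v - u) powr \<mu>" "K2 * (v - q) powr \<mu> \<le> K2 * (v - u) powr \<mu>"
      using K mu 3 uv by (auto intro!: mult_left_mono powr_mono2)
    ultimately show ?thesis by (simp add: algebra_simps)
  qed
qed

lemma holder_with_extend_constant:
  assumes h: "holder_with \<mu> L s a' D" and L: "0 \<le> L" and mu: "0 \<le> \<mu>"
    and left: "\<And>x. x \<in> {p..s} \<Longrightarrow> D x = 0" and right: "\<And>x. x \<in> {a'..q} \<Longrightarrow> D x = D a'"
    and pts: "p \<le> s" "s \<le> a'" "a' \<le> q"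
  shows "holder_with \<mu> L p q D"
proof -
  have "holder_with \<mu> 0 p s D" using left by (rule holder_with_const)
  from holder_with_concat[OF this h order_refl L mu pts(1,2)]
  have "holder_with \<mu> L p a' D" by simp
  moreover have "holder_with \<mu> 0 a' q D" using right by (rule holder_with_const)
  ultimately show ?thesis using holder_with_concat[OF _ _ L order_refl mu _ pts(3)] pts by fastforce
qed

lemma holder_with_stop:
  assumes h: "holder_with \<mu> K p c \<phi>" and K: "0 \<le> K" and mu: "0 \<le> \<mu>" and pc: "p \<le> c"
  shows "holder_with \<mu> K p r (\<lambda>x. \<phi> (min x c))"
  unfolding holder_with_def
proof (intro ballI)
  fix x y assume xy: "x \<in> {p..r}" "y \<in> {p..r}"
  have "\<bar>\<phi> (min x c) - \<phi> (min y c)\<bar> \<le> K * \<bar>min x c - min y c\<bar> powr \<mu>"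
    using holder_withD[OF h, of "min x c" "min y c"] xy pc by auto
  also have "\<dots> \<le> K * \<bar>x - y\<bar> powr \<mu>"
    using K mu by (intro mult_left_mono powr_mono2) (auto simp: min_def)
  finally show "\<bar>\<phi> (min x c) - \<phi> (min y c)\<bar> \<le> K * \<bar>x - y\<bar> powr \<mu>" .
qed

lemma holder_on_obtain_nonneg:
  assumes "holder_on \<mu> a b \<phi>"
  obtains K where "0 \<le> K" "holder_with \<mu> K a b \<phi>"
proof -
  obtain K where "holder_with \<mu> K a b \<phi>" using assms holder_on_iff_holder_with by blast
  then show ?thesis using that[of "max K 0"] holder_with_mono[of \<mu> K a b \<phi> "max K 0"] by simp
qed

lemma holder_semi_le:
  assumes ab: "a < b" and h: "holder_with \<mu> K a b \<phi>"
  shows "holder_semi \<mu> a b \<phi> \<le> K"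
  unfolding holder_semi_def
proof (rule cSUP_least)
  have "(a, b) \<in> {(x, y). x \<in> {a..b} \<and> y \<in> {a..b} \<and> x \<noteq> y}" using ab by auto
  then show "{(x, y). x \<in> {a..b} \<and> y \<in> {a..b} \<and> x \<noteq> y} \<noteq> {}" by blast
  fix p assume "p \<in> {(x, y). x \<in> {a..b} \<and> y \<in> {a..b} \<and> x \<noteq> y}"
  then obtain x y where p: "p = (x, y)" "x \<in> {a..b}" "y \<in> {a..b}" "x \<noteq> y" by auto
  then show "\<bar>\<phi> (fst p) - \<phi> (snd p)\<bar> / \<bar>fst p - snd p\<bar> powr \<mu> \<le> K"
    using holder_withD[OF h p(2,3)] by (simp add: divide_le_eq)
qed

lemma holder_with_holder_semi:
  assumes "holder_on \<mu> a b \<phi>"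
  shows "holder_with \<mu> (holder_semi \<mu> a b \<phi>) a b \<phi>"
proof -
  obtain K where h: "holder_with \<mu> K a b \<phi>" using assms holder_on_iff_holder_with by blast
  let ?S = "{(x, y). x \<in> {a..b} \<and> y \<in> {a..b} \<and> x \<noteq> y}"
  let ?q = "\<lambda>p. \<bar>\<phi> (fst p) - \<phi> (snd p)\<bar> / \<bar>fst p - snd p\<bar> powr \<mu>"
  have bdd: "bdd_above (?q ` ?S)"
  proof (rule bdd_aboveI2)
    fix p assume "p \<in> ?S"
    then obtain x y where p: "p = (x, y)" "x \<in> {a..b}" "y \<in> {a..b}" "x \<noteq> y" by auto
    then show "?q p \<le> K" using holder_withD[OF h p(2,3)] by (simp add: divide_le_eq)
  qed
  show ?thesis unfolding holder_with_def
  proof (intro ballI)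
    fix x y assume xy: "x \<in> {a..b}" "y \<in> {a..b}"
    show "\<bar>\<phi> x - \<phi> y\<bar> \<le> holder_semi \<mu> a b \<phi> * \<bar>x - y\<bar> powr \<mu>"
    proof (cases "x = y")
      case False
      have "?q (x, y) \<le> holder_semi \<mu> a b \<phi>" unfolding holder_semi_def
        using xy False by (intro cSUP_upper[OF _ bdd]) auto
      then show ?thesis using False by (simp add: divide_le_eq)
    qed simp
  qed
qed

lemma holder_semi_nonneg:
  assumes "a < b" "holder_on \<mu> a b \<phi>"
  shows "0 \<le> holder_semi \<mu> a b \<phi>"
proof -
  have "\<bar>\<phi> b - \<phi> a\<bar> \<le> holder_semi \<mu> a b \<phi> * \<bar>b - a\<bar> powr \<mu>"
    using assms by (intro holder_withD[OF holder_with_holder_semi]) auto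
  moreover have "0 < \<bar>b - a\<bar> powr \<mu>" using assms(1) by simp
  ultimately show ?thesis by (metis abs_ge_zero order_trans zero_le_mult_iff not_le)
qed

lemma holder_with_half_semi_const:
  assumes pq: "p < q" and ho: "holder_on \<mu> p q D"
    and half: "holder_with \<mu> (holder_semi \<mu> p q D / 2) p q D" and x: "x \<in> {p..q}"
  shows "D x = D p"
proof -
  have "holder_semi \<mu> p q D \<le> holder_semi \<mu> p q D / 2" by (rule holder_semi_le[OF pq half])
  then have "holder_semi \<mu> p q D = 0" using holder_semi_nonneg[OF pq ho] by simp
  then show ?thesis using holder_withD[OF holder_with_holder_semi[OF ho] x, of p] pq by simp
qed

lemma holder_with_limit:
  assumes "\<And>n. holder_with \<mu> K p q (Z n)" and "\<And>x. x \<in> {p..q} \<Longrightarrow> (\<lambda>n. Z n x) \<longlonglongrightarrow> Zl x"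
  shows "holder_with \<mu> K p q Zl"
  unfolding holder_with_def
proof (intro ballI)
  fix x y assume xy: "x \<in> {p..q}" "y \<in> {p..q}"
  have "(\<lambda>n. \<bar>Z n x - Z n y\<bar>) \<longlonglongrightarrow> \<bar>Zl x - Zl y\<bar>" by (intro tendsto_rabs tendsto_diff assms(2) xy)
  then show "\<bar>Zl x - Zl y\<bar> \<le> K * \<bar>x - y\<bar> powr \<mu>"
    using holder_withD[OF assms(1) xy] by (intro LIMSEQ_le_const2) auto
qed

lemma holder_geometric_limit:
  fixes Z :: "nat \<Rightarrow> real \<Rightarrow> real"
  assumes step: "\<And>n. holder_with \<mu> (C / 2 ^ n) p q (\<lambda>x. Z (Suc n) x - Z n x)"
    and fixed: "\<And>n. Z n p = Z 0 p" and C: "0 \<le> C"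
  shows "\<And>x. x \<in> {p..q} \<Longrightarrow> (\<lambda>n. Z n x) \<longlonglongrightarrow> lim (\<lambda>n. Z n x)"
    and "\<And>n. holder_with \<mu> (2 * C / 2 ^ n) p q (\<lambda>x. lim (\<lambda>k. Z k x) - Z n x)"
proof -
  show conv: "(\<lambda>n. Z n x) \<longlonglongrightarrow> lim (\<lambda>n. Z n x)" if x: "x \<in> {p..q}" for x
  proof -
    have "\<bar>Z (Suc n) x - Z n x\<bar> \<le> (C * \<bar>x - p\<bar> powr \<mu>) * (1 / 2) ^ n" for n
    proof -
      have "\<bar>(Z (Suc n) x - Z n x) - (Z (Suc n) p - Z n p)\<bar> \<le> C / 2 ^ n * \<bar>x - p\<bar> powr \<mu>"
        using holder_withD[OF step[of n] x, of p] x by auto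
      then show ?thesis using fixed[of n] fixed[of "Suc n"] by (simp add: power_one_over)
    qed
    then have "summable (\<lambda>n. Z (Suc n) x - Z n x)"
      by (intro summable_comparison_test'[OF summable_mult[OF summable_geometric]]) auto
    then have "(\<lambda>n. Z 0 x + (\<Sum>i<n. Z (Suc i) x - Z i x)) \<longlonglongrightarrow> Z 0 x + (\<Sum>i. Z (Suc i) x - Z i x)"
      by (intro tendsto_add tendsto_const summable_LIMSEQ)
    moreover have "Z 0 x + (\<Sum>i<n. Z (Suc i) x - Z i x) = Z n x" for n
      using sum_lessThan_telescope[of "\<lambda>i. Z i x" n] by simp
    ultimately have "convergent (\<lambda>n. Z n x)" unfolding convergent_def by auto
    then show ?thesis by (simp add: convergent_LIMSEQ_iff)
  qed
  have partial: "holder_with \<mu> (2 * C / 2 ^ n - 2 * C / 2 ^ (n + j)) p q (\<lambda>x. Z (n + j) x - Z n x)" for n j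
  proof (induction j)
    case 0
    show ?case by (simp add: holder_with_const)
  next
    case (Suc j)
    have "2 * C / 2 ^ n - 2 * C / 2 ^ (n + j) + C / 2 ^ (n + j) = 2 * C / 2 ^ n - 2 * C / 2 ^ (n + Suc j)"
      by (simp add: field_simps)
    then show ?case using holder_with_add[OF Suc step[of "n + j"]] by simp
  qed
  show "holder_with \<mu> (2 * C / 2 ^ n) p q (\<lambda>x. lim (\<lambda>k. Z k x) - Z n x)" for n
  proof (rule holder_with_limit)
    show "holder_with \<mu> (2 * C / 2 ^ n) p q (\<lambda>x. Z (n + j) x - Z n x)" for j
      by (rule holder_with_mono[OF partial[of n j]]) (use C in simp)
    show "(\<lambda>j. Z (n + j) x - Z n x) \<longlonglongrightarrow> lim (\<lambda>k. Z k x) - Z n x" if "x \<in> {p..q}" for x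
      using LIMSEQ_ignore_initial_segment[OF conv[OF that], of n]
      by (intro tendsto_diff) (simp_all add: add.commute)
  qed
qed

lemma powr_le_mult_powr:
  fixes d h l g :: real
  assumes "0 \<le> d" "d \<le> h" "l \<le> g"
  shows "d powr g \<le> d powr l * h powr (g - l)"
proof -
  have "d powr g = d powr l * d powr (g - l)" using powr_add[of d l "g - l"] by simp
  also have "\<dots> \<le> d powr l * h powr (g - l)" using assms by (intro mult_left_mono powr_mono2) auto
  finally show ?thesis .
qed

lemma exists_small_powr:
  fixes C \<epsilon> e :: real
  assumes "0 < \<epsilon>" "0 < e"
  shows "\<exists>h>0. \<forall>h'. 0 < h' \<longrightarrow> h' \<le> h \<longrightarrow> C * h' powr e < \<epsilon>"
proof -
  define C' where "C' = max C 0"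
  define h where "h = (\<epsilon> / (C' + 1)) powr (1 / e)"
  have pos: "0 < \<epsilon> / (C' + 1)" using assms unfolding C'_def by auto
  have "h powr e = \<epsilon> / (C' + 1)"
    unfolding h_def using pos assms powr_powr[of "\<epsilon> / (C' + 1)" "1 / e" e] by (simp add: C'_def)
  moreover have "C' * (\<epsilon> / (C' + 1)) < \<epsilon>" using assms unfolding C'_def by (simp add: field_simps)
  moreover have "C * h' powr e \<le> C' * h powr e" if "0 < h'" "h' \<le> h" for h'
  proof -
    have "C * h' powr e \<le> C' * h' powr e" unfolding C'_def by (intro mult_right_mono) auto
    also have "\<dots> \<le> C' * h powr e" using that assms unfolding C'_def by (intro mult_left_mono powr_mono2) auto
    finally show ?thesis .
  qed
  moreover have "0 < h" unfolding h_def using pos by (simp only: powr_gt_zero)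
  ultimately show ?thesis by fastforce
qed

lemma exists_small_powr_sum:
  fixes A B \<epsilon> e1 e2 :: real
  assumes "0 < \<epsilon>" "0 < e1" "0 < e2"
  shows "\<exists>h>0. \<forall>h'. 0 < h' \<longrightarrow> h' \<le> h \<longrightarrow> A * h' powr e1 + B * h' powr e2 < \<epsilon>"
proof -
  obtain h1 where h1: "h1 > 0" "\<forall>h'. 0 < h' \<longrightarrow> h' \<le> h1 \<longrightarrow> A * h' powr e1 < \<epsilon> / 2"
    using exists_small_powr[of "\<epsilon> / 2" e1 A] assms by auto
  obtain h2 where h2: "h2 > 0" "\<forall>h'. 0 < h' \<longrightarrow> h' \<le> h2 \<longrightarrow> B * h' powr e2 < \<epsilon> / 2"
    using exists_small_powr[of "\<epsilon> / 2" e2 B] assms by auto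
  have "A * h' powr e1 + B * h' powr e2 < \<epsilon>" if "0 < h'" "h' \<le> min h1 h2" for h'
    using h1(2) h2(2) that by fastforce
  then show ?thesis using h1(1) h2(1) by (intro exI[of _ "min h1 h2"]) auto
qed

lemma holder_product_increment:
  fixes g b :: "real \<Rightarrow> real"
  assumes hg: "holder_with \<alpha> Kg s t g" and hb: "holder_with \<beta> Kb s t b"
    and K: "0 \<le> Kg" "0 \<le> Kb" and pos: "0 \<le> \<alpha>" "0 \<le> \<beta>"
    and pts: "s \<le> x" "x \<le> z" "z \<le> w" "w \<le> t"
  shows "\<bar>(g z - g x) * (b w - b z)\<bar> \<le> Kg * Kb * (w - x) powr (\<alpha> + \<beta>)"
proof -
  have "\<bar>g z - g x\<bar> \<le> Kg * \<bar>z - x\<bar> powr \<alpha>" using holder_withD[OF hg, of z x] pts by auto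
  also have "\<dots> \<le> Kg * (w - x) powr \<alpha>" using pts K pos by (intro mult_left_mono powr_mono2) auto
  finally have 1: "\<bar>g z - g x\<bar> \<le> Kg * (w - x) powr \<alpha>" .
  have "\<bar>b w - b z\<bar> \<le> Kb * \<bar>w - z\<bar> powr \<beta>" using holder_withD[OF hb, of w z] pts by auto
  also have "\<dots> \<le> Kb * (w - x) powr \<beta>" using pts K pos by (intro mult_left_mono powr_mono2) auto
  finally have 2: "\<bar>b w - b z\<bar> \<le> Kb * (w - x) powr \<beta>" .
  have "\<bar>(g z - g x) * (b w - b z)\<bar> \<le> (Kg * (w - x) powr \<alpha>) * (Kb * (w - x) powr \<beta>)"
    unfolding abs_mult using 1 2 by (intro mult_mono) auto
  also have "\<dots> = Kg * Kb * (w - x) powr (\<alpha> + \<beta>)" by (simp add: powr_add)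
  finally show ?thesis .
qed

section \<open>Finite partitions and their sums\<close>

definition finite_partition :: "real \<Rightarrow> real \<Rightarrow> real set \<Rightarrow> bool" where
  "finite_partition s t P \<longleftrightarrow> finite P \<and> P \<subseteq> {s..t} \<and> s \<in> P \<and> t \<in> P"

definition next_point :: "real set \<Rightarrow> real \<Rightarrow> real" where
  "next_point P x = Min {y\<in>P. x < y}"

definition partition_sum :: "(real \<Rightarrow> real \<Rightarrow> real) \<Rightarrow> real \<Rightarrow> real set \<Rightarrow> real" where
  "partition_sum \<phi> t P = (\<Sum>x\<in>P - {t}. \<phi> x (next_point P x))"

definition young_sum :: "(real \<Rightarrow> real) \<Rightarrow> (real \<Rightarrow> real) \<Rightarrow> real \<Rightarrow> real set \<Rightarrow> real" where
  "young_sum g b t P = partition_sum (\<lambda>x y. g x * (b y - b x)) t P"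

definition mesh_below :: "real set \<Rightarrow> real \<Rightarrow> real \<Rightarrow> bool" where
  "mesh_below P t \<delta> \<longleftrightarrow> (\<forall>x\<in>P - {t}. next_point P x - x < \<delta>)"

lemma next_point_eqI:
  assumes "finite P" "m \<in> P" "x < m" "\<And>y. y \<in> P \<Longrightarrow> x < y \<Longrightarrow> m \<le> y"
  shows "next_point P x = m"
  unfolding next_point_def using assms by (intro Min_eqI) auto

lemma next_point:
  assumes "finite P" "z \<in> P" "x < z"
  shows "next_point P x \<in> P" "x < next_point P x" "next_point P x \<le> z"
    "\<And>y. y \<in> P \<Longrightarrow> x < y \<Longrightarrow> next_point P x \<le> y"
proof -
  have f: "finite {y\<in>P. x < y}" "{y\<in>P. x < y} \<noteq> {}" using assms by auto
  have "next_point P x \<in> {y\<in>P. x < y}" unfolding next_point_def using f by (rule Min_in)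
  then show "next_point P x \<in> P" "x < next_point P x" by auto
  show "\<And>y. y \<in> P \<Longrightarrow> x < y \<Longrightarrow> next_point P x \<le> y"
    unfolding next_point_def using f by (intro Min_le) auto
  then show "next_point P x \<le> z" using assms by auto
qed

lemma finite_partition_next_point:
  assumes "finite_partition s t P" "x \<in> P" "x < t"
  shows "next_point P x \<in> P" "x < next_point P x" "next_point P x \<le> t"
    "\<And>y. y \<in> P \<Longrightarrow> x < y \<Longrightarrow> next_point P x \<le> y"
  using next_point[of P t x] assms unfolding finite_partition_def by auto

lemma next_point_strict_mono:
  assumes "finite_partition s t P" "x \<in> P" "y \<in> P" "x < y" "y < t"
  shows "next_point P x < next_point P y"
  using finite_partition_next_point[OF assms(1) assms(2)]
    finite_partition_next_point[OF assms(1) assms(3) assms(5)] assms by force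

lemma next_point_inj_on:
  assumes P: "finite_partition s t P"
  shows "inj_on (next_point P) (P - {t})"
proof (rule inj_onI)
  fix x y assume xy: "x \<in> P - {t}" "y \<in> P - {t}" "next_point P x = next_point P y"
  then have "x < t" "y < t" using P unfolding finite_partition_def by auto
  then show "x = y"
    using next_point_strict_mono[OF P, of x y] next_point_strict_mono[OF P, of y x] xy
    by (cases x y rule: linorder_cases) auto
qed

lemma next_point_restrict:
  assumes P: "finite_partition s t P" and c: "c \<in> P" and x: "x \<in> P"
  shows "x < c \<Longrightarrow> next_point (P \<inter> {s..c}) x = next_point P x"
    and "c \<le> x \<Longrightarrow> x < t \<Longrightarrow> next_point (P \<inter> {c..t}) x = next_point P x"
proof -
  have fin: "finite P" and tP: "t \<in> P" using P unfolding finite_partition_def by auto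
  show "x < c \<Longrightarrow> next_point (P \<inter> {s..c}) x = next_point P x"
    using next_point[OF fin c, of x] x fin P unfolding finite_partition_def by (intro next_point_eqI) auto
  show "c \<le> x \<Longrightarrow> x < t \<Longrightarrow> next_point (P \<inter> {c..t}) x = next_point P x"
    using next_point[OF fin tP, of x] x fin P unfolding finite_partition_def by (intro next_point_eqI) auto
qed

lemma finite_partition_restrict:
  assumes "finite_partition s t P" "c \<in> P"
  shows "finite_partition s c (P \<inter> {s..c})" "finite_partition c t (P \<inter> {c..t})"
  using assms unfolding finite_partition_def by auto

lemma finite_partition_trivial_iff: "finite_partition s s P \<longleftrightarrow> P = {s}"
  unfolding finite_partition_def by auto

lemma finite_partition_union:
  assumes P: "finite_partition s u P" and Q: "finite_partition u t Q"
  shows "finite_partition s t (P \<union> Q)" "(P \<union> Q) \<inter> {s..u} = P" "(P \<union> Q) \<inter> {u..t} = Q"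
proof -
  have "s \<le> u" "u \<le> t" "P \<subseteq> {s..u}" "Q \<subseteq> {u..t}"
    using P Q unfolding finite_partition_def by auto
  then show "finite_partition s t (P \<union> Q)" "(P \<union> Q) \<inter> {s..u} = P" "(P \<union> Q) \<inter> {u..t} = Q"
    using P Q unfolding finite_partition_def by fastforce+
qed

lemma partition_sum_split:
  assumes P: "finite_partition s t P" and c: "c \<in> P"
  shows "partition_sum \<phi> t P = partition_sum \<phi> c (P \<inter> {s..c}) + partition_sum \<phi> t (P \<inter> {c..t})"
proof -
  have fin: "finite P" and ct: "s \<le> c" "c \<le> t" using assms unfolding finite_partition_def by auto
  have U: "P - {t} = (P \<inter> {s..c} - {c}) \<union> (P \<inter> {c..t} - {t})"
    using assms ct unfolding finite_partition_def by auto
  have "partition_sum \<phi> t P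
      = (\<Sum>x\<in>P \<inter> {s..c} - {c}. \<phi> x (next_point P x)) + (\<Sum>x\<in>P \<inter> {c..t} - {t}. \<phi> x (next_point P x))"
    unfolding partition_sum_def U using fin by (intro sum.union_disjoint) auto
  also have "(\<Sum>x\<in>P \<inter> {s..c} - {c}. \<phi> x (next_point P x)) = partition_sum \<phi> c (P \<inter> {s..c})"
    unfolding partition_sum_def using next_point_restrict(1)[OF P c] by (intro sum.cong) auto
  also have "(\<Sum>x\<in>P \<inter> {c..t} - {t}. \<phi> x (next_point P x)) = partition_sum \<phi> t (P \<inter> {c..t})"
    unfolding partition_sum_def using next_point_restrict(2)[OF P c] by (intro sum.cong) auto
  finally show ?thesis .
qed

lemma partition_sum_trivial: "partition_sum \<phi> s {s} = 0"
  unfolding partition_sum_def by simp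

lemma partition_sum_two_points: "s < t \<Longrightarrow> partition_sum \<phi> t {s, t} = \<phi> s t"
proof -
  assume st: "s < t"
  have "next_point {s,t} s = t" using st by (intro next_point_eqI) auto
  moreover have "{s,t} - {t} = {s}" using st by auto
  ultimately show ?thesis unfolding partition_sum_def by simp
qed

lemma finite_partition_last_point:
  assumes P: "finite_partition s t P" and st: "s < t"
  obtains t' where "t' \<in> P" "s \<le> t'" "t' < t" "P \<inter> {s..t'} = P - {t}" "P \<inter> {t'..t} = {t', t}"
    "finite_partition s t' (P - {t})" "card (P - {t}) < card P"
proof -
  let ?Q = "P - {t}"
  have P': "P \<subseteq> {s..t}" "t \<in> P" "finite P" "s \<in> ?Q" using assms unfolding finite_partition_def by auto
  define t' where "t' = Max ?Q"
  have t'Q: "t' \<in> ?Q" unfolding t'_def using P' by (intro Max_in) auto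
  have le: "\<And>y. y \<in> ?Q \<Longrightarrow> y \<le> t'" unfolding t'_def using P' by (intro Max_ge) auto
  have "t' < t" using t'Q P' by force
  moreover have "P \<inter> {t'..t} = {t', t}" using le P' \<open>t' < t\<close> t'Q by (auto simp: subset_iff) force+
  moreover have "P \<inter> {s..t'} = ?Q" using le P' \<open>t' < t\<close> by (auto simp: subset_iff)
  moreover have "finite_partition s t' ?Q"
    using le P' t'Q unfolding finite_partition_def by (auto simp: subset_iff)
  moreover have "card ?Q < card P" using P' by (meson card_Diff1_less)
  moreover have "s \<le> t'" using le P' by auto
  ultimately show ?thesis using that t'Q by blast
qed

lemma finite_partition_card_le_two:
  assumes P: "finite_partition s t P" and card: "card P \<le> 2"
  shows "(s = t \<and> P = {s}) \<or> (s < t \<and> P = {s, t})"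
proof (cases "s = t")
  case True
  then show ?thesis using P finite_partition_trivial_iff by simp
next
  case False
  then have "s < t" using P unfolding finite_partition_def by auto
  moreover have "{s, t} = P"
    using card_seteq[of P "{s, t}"] card \<open>s < t\<close> P unfolding finite_partition_def by auto
  ultimately show ?thesis by simp
qed

lemma partition_sum_last_point:
  assumes "finite_partition s t P" "s < t" "t' \<in> P" "P \<inter> {s..t'} = P - {t}" "P \<inter> {t'..t} = {t', t}"
    "t' < t"
  shows "partition_sum \<phi> t P = partition_sum \<phi> t' (P - {t}) + \<phi> t' t"
  using partition_sum_split[OF assms(1) assms(3), of \<phi>] assms partition_sum_two_points[of t' t \<phi>]
  by simp

lemma partition_sum_telescope:
  "finite_partition s t P \<Longrightarrow> partition_sum (\<lambda>x y. F y - F x) t P = F t - F s"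
proof (induction "card P" arbitrary: t P rule: less_induct)
  case less
  show ?case
  proof (cases "s < t")
    case False
    then have "s = t" using less.prems unfolding finite_partition_def by auto
    then show ?thesis using less.prems by (simp add: finite_partition_trivial_iff partition_sum_trivial)
  next
    case True
    obtain t' where t': "t' \<in> P" "s \<le> t'" "t' < t" "P \<inter> {s..t'} = P - {t}" "P \<inter> {t'..t} = {t', t}"
      "finite_partition s t' (P - {t})" "card (P - {t}) < card P"
      using finite_partition_last_point[OF less.prems True] by blast
    then show ?thesis
      using partition_sum_last_point[OF less.prems True t'(1,4,5,3)] less.hyps[OF t'(7) t'(6)] by simp
  qed
qed

lemma partition_sum_gaps:
  "finite_partition s t P \<Longrightarrow> (\<Sum>x\<in>P - {t}. next_point P x - x) = t - s"
  using partition_sum_telescope[of s t P "\<lambda>x. x"] unfolding partition_sum_def by simp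

lemma partition_gap_sum_le:
  assumes P: "finite_partition s t P" and A: "A \<subseteq> P - {t}"
  shows "(\<Sum>x\<in>A. next_point P x - x) \<le> t - s"
proof -
  have "0 \<le> next_point P x - x" if "x \<in> P - {t}" for x
  proof -
    have "x < t" using that P unfolding finite_partition_def by auto
    then show ?thesis using finite_partition_next_point(2)[OF P, of x] that by simp
  qed
  then have "(\<Sum>x\<in>A. next_point P x - x) \<le> (\<Sum>x\<in>P - {t}. next_point P x - x)"
    using A P unfolding finite_partition_def by (intro sum_mono2) auto
  then show ?thesis using partition_sum_gaps[OF P] by simp
qed

lemma partition_sum_remove_point:
  assumes P: "finite_partition s t P" and x: "x \<in> P" "x < t" and z: "z = next_point P x" "z < t"
  shows "partition_sum \<phi> t P - partition_sum \<phi> t (P - {z})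
    = \<phi> x z + \<phi> z (next_point P z) - \<phi> x (next_point P z)"
proof -
  have fin: "finite P" using P unfolding finite_partition_def by auto
  have xz: "x < z" and zP: "z \<in> P" using finite_partition_next_point[OF P x] z by auto
  let ?R = "P - {t, x, z}"
  have nz: "next_point P z \<in> P" "z < next_point P z" "\<And>y. y \<in> P \<Longrightarrow> z < y \<Longrightarrow> next_point P z \<le> y"
    using finite_partition_next_point[OF P zP z(2)] by auto
  have skip: "next_point (P - {z}) x = next_point P z"
  proof (rule next_point_eqI)
    fix y assume y: "y \<in> P - {z}" "x < y"
    then have "z < y" using finite_partition_next_point(4)[OF P x] z by force
    then show "next_point P z \<le> y" using nz y by auto
  qed (use fin nz xz in auto)
  have keep: "next_point (P - {z}) y = next_point P y" if y: "y \<in> ?R" for y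
  proof -
    have yt: "y < t" and yP: "y \<in> P" using y P unfolding finite_partition_def by auto
    have "next_point P y \<noteq> z"
      proof
      assume "next_point P y = z"
      moreover have "x \<noteq> y" using y by auto
      ultimately show False
        using next_point_strict_mono[OF P x(1) yP _ yt] next_point_strict_mono[OF P yP x(1) _ x(2)] z(1)
        by (metis linorder_neqE_linordered_idom order_less_irrefl)
    qed
    then show ?thesis
      using finite_partition_next_point[OF P yP yt] fin by (intro next_point_eqI) auto
  qed
  have "P - {t} = insert x (insert z ?R)" "P - {z} - {t} = insert x ?R"
    using P x xz z zP unfolding finite_partition_def by auto
  then have "partition_sum \<phi> t P = \<phi> x z + (\<phi> z (next_point P z) + (\<Sum>y\<in>?R. \<phi> y (next_point P y)))"
    and "partition_sum \<phi> t (P - {z}) = \<phi> x (next_point P z) + (\<Sum>y\<in>?R. \<phi> y (next_point P y))"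
    unfolding partition_sum_def using fin xz z skip keep by simp_all
  then show ?thesis by simp
qed

lemma partition_sum_diff:
  "partition_sum (\<lambda>x y. \<phi> x y - \<psi> x y) t P = partition_sum \<phi> t P - partition_sum \<psi> t P"
  unfolding partition_sum_def by (simp add: sum_subtractf)

lemma partition_sum_abs_le:
  assumes "\<And>x. x \<in> P - {t} \<Longrightarrow> \<bar>\<phi> x (next_point P x)\<bar> \<le> \<psi> x (next_point P x)"
  shows "\<bar>partition_sum \<phi> t P\<bar> \<le> partition_sum \<psi> t P"
  unfolding partition_sum_def by (rule order_trans[OF sum_abs]) (use assms in \<open>auto intro: sum_mono\<close>)

lemma partition_sum_powr_le:
  assumes P: "finite_partition s t P" and mesh: "mesh_below P t \<delta>" and th: "1 \<le> \<theta>"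
  shows "partition_sum (\<lambda>x y. (y - x) powr \<theta>) t P \<le> \<delta> powr (\<theta> - 1) * (t - s)"
proof -
  have "partition_sum (\<lambda>x y. (y - x) powr \<theta>) t P \<le> (\<Sum>x\<in>P - {t}. \<delta> powr (\<theta> - 1) * (next_point P x - x))"
    unfolding partition_sum_def
  proof (rule sum_mono)
    fix x assume x: "x \<in> P - {t}"
    then have "x < t" using P unfolding finite_partition_def by fastforce
    then have pos: "0 < next_point P x - x" using finite_partition_next_point(2)[OF P] x by auto
    have "(next_point P x - x) powr \<theta> = (next_point P x - x) powr (\<theta> - 1) * (next_point P x - x)"
      using pos powr_add[of "next_point P x - x" "\<theta> - 1" 1] by simp
    also have "\<dots> \<le> \<delta> powr (\<theta> - 1) * (next_point P x - x)"
      using pos mesh x th unfolding mesh_below_def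
      by (intro mult_right_mono powr_mono2) (auto intro: less_imp_le)
    finally show "(next_point P x - x) powr \<theta> \<le> \<delta> powr (\<theta> - 1) * (next_point P x - x)" .
  qed
  also have "\<dots> = \<delta> powr (\<theta> - 1) * (t - s)"
    using partition_sum_gaps[OF P] by (simp add: sum_distrib_left[symmetric])
  finally show ?thesis .
qed

lemma mesh_below_mono: "mesh_below P t \<delta> \<Longrightarrow> \<delta> \<le> \<delta>' \<Longrightarrow> mesh_below P t \<delta>'"
  unfolding mesh_below_def by force

lemma mesh_below_split:
  assumes P: "finite_partition s t P" and c: "c \<in> P"
    and "mesh_below (P \<inter> {s..c}) c \<delta>" "mesh_below (P \<inter> {c..t}) t \<delta>"
  shows "mesh_below P t \<delta>"
  unfolding mesh_below_def
proof
  fix x assume x: "x \<in> P - {t}"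
  then have x': "x \<in> P" "s \<le> x" "x < t" using P unfolding finite_partition_def by auto
  show "next_point P x - x < \<delta>"
  proof (cases "x < c")
    case True
    then have "x \<in> P \<inter> {s..c} - {c}" using x' by auto
    then have "next_point (P \<inter> {s..c}) x - x < \<delta>" using assms(3) unfolding mesh_below_def by blast
    then show ?thesis using next_point_restrict(1)[OF P c x'(1) True] by simp
  next
    case False
    then have "x \<in> P \<inter> {c..t} - {t}" using x' by auto
    then have "next_point (P \<inter> {c..t}) x - x < \<delta>" using assms(4) unfolding mesh_below_def by blast
    then show ?thesis using next_point_restrict(2)[OF P c x'(1) _ x'(3)] False by simp
  qed
qed

section \<open>The Young--Loeve estimate\<close>

lemma exists_le_average:
  fixes f :: "'a \<Rightarrow> real"
  assumes "finite A" "A \<noteq> {}" "sum f A \<le> M"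
  shows "\<exists>x\<in>A. f x \<le> M / card A"
proof (rule ccontr)
  assume "\<not> ?thesis"
  then have "sum (\<lambda>x. M / card A) A < sum f A" using assms by (intro sum_strict_mono) auto
  then show False using assms by simp
qed

text \<open>Among the \<open>card P - 2\<close> pairs of consecutive gaps below \<open>t\<close>, whose total length is at most
  \<open>2 (t - s)\<close>, one is no longer than the average.\<close>

lemma finite_partition_short_double_gap:
  assumes P: "finite_partition s t P" and card: "3 \<le> card P"
  obtains x where "x \<in> P" "x < t" "next_point P x < t"
    "next_point P (next_point P x) - x \<le> 2 * (t - s) / real (card P - 2)"
proof -
  have fin: "finite P" and sub: "P \<subseteq> {s..t}" and tP: "t \<in> P"
    using P unfolding finite_partition_def by auto
  have st: "s < t"
  proof (rule ccontr)
    assume "\<not> s < t"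
    then have "P = {s}" using P finite_partition_trivial_iff[of s P] unfolding finite_partition_def by force
    then show False using card by simp
  qed
  obtain t' where t': "t' \<in> P" "s \<le> t'" "t' < t" "P \<inter> {s..t'} = P - {t}" "P \<inter> {t'..t} = {t', t}"
    "finite_partition s t' (P - {t})" "card (P - {t}) < card P"
    by (rule finite_partition_last_point[OF P st])
  define gap where "gap x = next_point P x - x" for x
  define A where "A = {x\<in>P - {t}. next_point P x < t}"
  have finA: "finite A" and A: "A \<subseteq> P - {t}" unfolding A_def using fin by auto
  have "P - {t} - {t'} \<subseteq> A"
  proof
    fix x assume x: "x \<in> P - {t} - {t'}"
    then have "x \<in> P \<inter> {s..t'}" using t'(4) by auto
    then have "x < t'" using x by auto
    then have "next_point P x \<le> t'" using finite_partition_next_point(4)[OF P _ _ t'(1)] x t'(3) by auto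
    then show "x \<in> A" unfolding A_def using x t'(3) by auto
  qed
  moreover have "card (P - {t} - {t'}) = card P - 2" using fin tP t'(1,3) by (simp add: card_Diff_singleton)
  ultimately have cA: "card P - 2 \<le> card A" using card_mono[OF finA] by metis
  have "(\<Sum>x\<in>A. gap (next_point P x)) = (\<Sum>y\<in>next_point P ` A. gap y)"
    using sum.reindex[OF inj_on_subset[OF next_point_inj_on[OF P] A], of gap] by simp
  also have "\<dots> \<le> t - s"
    unfolding gap_def using A finite_partition_next_point(1)[OF P] sub unfolding A_def
    by (intro partition_gap_sum_le[OF P]) fastforce
  moreover have "(\<Sum>x\<in>A. gap x) \<le> t - s" using partition_gap_sum_le[OF P A] unfolding gap_def .
  ultimately have "(\<Sum>x\<in>A. gap (next_point P x)) + (\<Sum>x\<in>A. gap x) \<le> 2 * (t - s)"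
    using add_mono by fastforce
  moreover have "(\<Sum>x\<in>A. next_point P (next_point P x) - x) = (\<Sum>x\<in>A. gap (next_point P x)) + (\<Sum>x\<in>A. gap x)"
    unfolding gap_def by (simp add: sum.distrib[symmetric])
  ultimately have "(\<Sum>x\<in>A. next_point P (next_point P x) - x) \<le> 2 * (t - s)" by simp
  moreover have "A \<noteq> {}" using cA card by auto
  ultimately obtain x where x: "x \<in> A" "next_point P (next_point P x) - x \<le> 2 * (t - s) / card A"
    using exists_le_average[OF finA] by blast
  have "2 * (t - s) / card A \<le> 2 * (t - s) / real (card P - 2)"
    using cA card st by (intro divide_left_mono) auto
  then show ?thesis using that[of x] x sub unfolding A_def by fastforce
qed

lemma young_sum_remove_point:
  assumes P: "finite_partition s t P" and x: "x \<in> P" "x < t" "next_point P x < t"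
  shows "young_sum g b t P - young_sum g b t (P - {next_point P x})
    = (g (next_point P x) - g x) * (b (next_point P (next_point P x)) - b (next_point P x))"
  unfolding young_sum_def
  using partition_sum_remove_point[OF P x(1,2) refl x(3), of "\<lambda>x y. g x * (b y - b x)"]
  by (simp add: algebra_simps)

lemma young_sum_estimate_card:
  fixes g b :: "real \<Rightarrow> real"
  assumes hg: "holder_with \<alpha> Kg s t g" and hb: "holder_with \<beta> Kb s t b"
    and K: "0 \<le> Kg" "0 \<le> Kb" and pos: "0 < \<alpha>" "0 < \<beta>"
  shows "finite_partition s t P \<Longrightarrow> \<bar>young_sum g b t P - g s * (b t - b s)\<bar>
    \<le> Kg * Kb * (2 * (t - s)) powr (\<alpha> + \<beta>) * (\<Sum>m\<in>{1..card P - 2}. real m powr - (\<alpha> + \<beta>))"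
proof (induction "card P" arbitrary: P rule: less_induct)
  case less
  have P: "finite_partition s t P" by fact
  have fin: "finite P" and sub: "P \<subseteq> {s..t}" using P unfolding finite_partition_def by auto
  let ?C = "Kg * Kb * (2 * (t - s)) powr (\<alpha> + \<beta>)"
  show ?case
  proof (cases "card P \<le> 2")
    case True
    have "0 \<le> ?C * (\<Sum>m\<in>{1..k}. real m powr - (\<alpha> + \<beta>))" for k using K by (intro mult_nonneg_nonneg sum_nonneg) auto
    then show ?thesis using finite_partition_card_le_two[OF P True]
      unfolding young_sum_def by (auto simp: partition_sum_trivial partition_sum_two_points)
  next
    case False
    define k where "k = card P - 2"
    obtain x where x: "x \<in> P" "x < t" "next_point P x < t"
      "next_point P (next_point P x) - x \<le> 2 * (t - s) / real k"
      using finite_partition_short_double_gap[OF P] False unfolding k_def by force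
    define z where "z = next_point P x"
    define w where "w = next_point P z"
    have xz: "x < z" "z \<in> P" "z < t" using finite_partition_next_point[OF P x(1,2)] x(3) unfolding z_def by auto
    have zw: "z < w" "w \<le> t" using finite_partition_next_point[OF P xz(2,3)] unfolding w_def by auto
    have k: "1 \<le> k" "s < t" using False x(1,2) sub unfolding k_def by force+
    have "\<bar>young_sum g b t (P - {z}) - g s * (b t - b s)\<bar> \<le> ?C * (\<Sum>m\<in>{1..k - 1}. real m powr - (\<alpha> + \<beta>))"
    proof -
      have "finite_partition s t (P - {z})" using P xz x sub unfolding finite_partition_def by auto
      moreover have "card (P - {z}) < card P" "card (P - {z}) - 2 = k - 1"
        using fin xz(2) card_Diff1_less[OF fin xz(2)] unfolding k_def by (auto simp: card_Diff_singleton)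
      ultimately show ?thesis using less.hyps by metis
    qed
    moreover have "\<bar>(g z - g x) * (b w - b z)\<bar> \<le> ?C * real k powr - (\<alpha> + \<beta>)"
    proof -
      have "\<bar>(g z - g x) * (b w - b z)\<bar> \<le> Kg * Kb * (w - x) powr (\<alpha> + \<beta>)"
        using holder_product_increment[OF hg hb K] pos sub x xz zw by auto
      also have "\<dots> \<le> Kg * Kb * (2 * (t - s) / k) powr (\<alpha> + \<beta>)"
        using K pos xz zw x(4) unfolding w_def z_def by (intro mult_left_mono powr_mono2) auto
      also have "\<dots> = ?C * real k powr - (\<alpha> + \<beta>)"
        using k powr_minus_divide[of "real k" "\<alpha> + \<beta>"] by (simp add: powr_divide)
      finally show ?thesis .
    qed
    moreover have "young_sum g b t P - young_sum g b t (P - {z}) = (g z - g x) * (b w - b z)"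
      using young_sum_remove_point[OF P x(1-3), of g b] unfolding z_def w_def .
    moreover have "?C * (\<Sum>m\<in>{1..k}. real m powr - (\<alpha> + \<beta>))
        = ?C * (\<Sum>m\<in>{1..k - 1}. real m powr - (\<alpha> + \<beta>)) + ?C * real k powr - (\<alpha> + \<beta>)"
      using k by (cases k) (auto simp: sum.cl_ivl_Suc algebra_simps)
    ultimately show ?thesis unfolding k_def by linarith
  qed
qed

definition young_loeve_constant :: "real \<Rightarrow> real" where
  "young_loeve_constant \<theta> = 2 powr \<theta> * (\<Sum>n. real n powr - \<theta>)"

lemma young_loeve_constant_nonneg: "1 < \<theta> \<Longrightarrow> 0 \<le> young_loeve_constant \<theta>"
  unfolding young_loeve_constant_def using summable_real_powr_iff[of "- \<theta>"]
  by (intro mult_nonneg_nonneg suminf_nonneg) auto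

theorem young_loeve_estimate:
  fixes g b :: "real \<Rightarrow> real"
  assumes hg: "holder_with \<alpha> Kg s t g" and hb: "holder_with \<beta> Kb s t b"
    and K: "0 \<le> Kg" "0 \<le> Kb" and pos: "0 < \<alpha>" "0 < \<beta>" "1 < \<alpha> + \<beta>" and P: "finite_partition s t P"
  shows "\<bar>young_sum g b t P - g s * (b t - b s)\<bar> \<le> young_loeve_constant (\<alpha> + \<beta>) * Kg * Kb * (t - s) powr (\<alpha> + \<beta>)"
proof -
  let ?\<theta> = "\<alpha> + \<beta>"
  have st: "s \<le> t" using P unfolding finite_partition_def by auto
  have "(\<Sum>m\<in>{1..card P - 2}. real m powr - ?\<theta>) \<le> (\<Sum>n. real n powr - ?\<theta>)"
    using summable_real_powr_iff[of "- ?\<theta>"] pos by (intro sum_le_suminf) auto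
  then have "Kg * Kb * (2 * (t - s)) powr ?\<theta> * (\<Sum>m\<in>{1..card P - 2}. real m powr - ?\<theta>)
      \<le> Kg * Kb * (2 * (t - s)) powr ?\<theta> * (\<Sum>n. real n powr - ?\<theta>)"
    using K by (intro mult_left_mono) auto
  also have "\<dots> = young_loeve_constant ?\<theta> * Kg * Kb * (t - s) powr ?\<theta>"
    unfolding young_loeve_constant_def using powr_mult[of 2 "t - s" ?\<theta>] st by simp
  finally show ?thesis using young_sum_estimate_card[OF hg hb K pos(1,2) P] by linarith
qed

lemma young_sum_refine:
  fixes g b :: "real \<Rightarrow> real"
  assumes K: "0 \<le> Kg" "0 \<le> Kb" and pos: "0 < \<alpha>" "0 < \<beta>" "1 < \<alpha> + \<beta>"
  shows "finite_partition s t P \<Longrightarrow> finite_partition s t R \<Longrightarrow> P \<subseteq> R \<Longrightarrow>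
    holder_with \<alpha> Kg s t g \<Longrightarrow> holder_with \<beta> Kb s t b \<Longrightarrow>
    \<bar>young_sum g b t R - young_sum g b t P\<bar>
      \<le> young_loeve_constant (\<alpha> + \<beta>) * Kg * Kb * partition_sum (\<lambda>x y. (y - x) powr (\<alpha> + \<beta>)) t P"
proof (induction "card P" arbitrary: t P R rule: less_induct)
  case less
  let ?C = "young_loeve_constant (\<alpha> + \<beta>) * Kg * Kb"
  have st: "s \<le> t" using less.prems unfolding finite_partition_def by auto
  show ?case
  proof (cases "s = t")
    case True
    then have "P = {s}" "R = {s}" using less.prems finite_partition_trivial_iff by auto
    then show ?thesis using True by (simp add: young_sum_def partition_sum_trivial)
  next
    case False
    then have slt: "s < t" using st by auto
    obtain t' where t': "t' \<in> P" "s \<le> t'" "t' < t" "P \<inter> {s..t'} = P - {t}" "P \<inter> {t'..t} = {t', t}"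
      "finite_partition s t' (P - {t})" "card (P - {t}) < card P"
      using finite_partition_last_point[OF less.prems(1) slt] by blast
    have t'R: "t' \<in> R" using t' less.prems by auto
    have "\<bar>young_sum g b t' (R \<inter> {s..t'}) - young_sum g b t' (P - {t})\<bar>
        \<le> ?C * partition_sum (\<lambda>x y. (y - x) powr (\<alpha> + \<beta>)) t' (P - {t})"
    proof (rule less.hyps[OF t'(7) t'(6)])
      show "finite_partition s t' (R \<inter> {s..t'})" using finite_partition_restrict(1)[OF less.prems(2) t'R] .
      show "P - {t} \<subseteq> R \<inter> {s..t'}" using t'(4) less.prems(3) by auto
      show "holder_with \<alpha> Kg s t' g" "holder_with \<beta> Kb s t' b"
        using less.prems(4,5) t' by (auto intro: holder_with_subinterval)
    qed
    moreover have "\<bar>young_sum g b t (R \<inter> {t'..t}) - g t' * (b t - b t')\<bar> \<le> ?C * (t - t') powr (\<alpha> + \<beta>)"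
      using young_loeve_estimate[OF holder_with_subinterval[OF less.prems(4)]
          holder_with_subinterval[OF less.prems(5)] K pos finite_partition_restrict(2)[OF less.prems(2) t'R]] t'
      by auto
    moreover have "young_sum g b t R = young_sum g b t' (R \<inter> {s..t'}) + young_sum g b t (R \<inter> {t'..t})"
      unfolding young_sum_def by (rule partition_sum_split[OF less.prems(2) t'R])
    moreover have "young_sum g b t P = young_sum g b t' (P - {t}) + g t' * (b t - b t')"
      unfolding young_sum_def using partition_sum_last_point[OF less.prems(1) slt t'(1,4,5,3)] .
    moreover have "partition_sum (\<lambda>x y. (y - x) powr (\<alpha> + \<beta>)) t P
        = partition_sum (\<lambda>x y. (y - x) powr (\<alpha> + \<beta>)) t' (P - {t}) + (t - t') powr (\<alpha> + \<beta>)"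
      using partition_sum_last_point[OF less.prems(1) slt t'(1,4,5,3)] .
    ultimately show ?thesis by (simp add: algebra_simps)
  qed
qed

lemma young_sum_cauchy:
  fixes g b :: "real \<Rightarrow> real"
  assumes hg: "holder_with \<alpha> Kg s t g" and hb: "holder_with \<beta> Kb s t b" and K: "0 \<le> Kg" "0 \<le> Kb"
    and pos: "0 < \<alpha>" "0 < \<beta>" "1 < \<alpha> + \<beta>"
    and P: "finite_partition s t P" "mesh_below P t \<delta>" and Q: "finite_partition s t Q" "mesh_below Q t \<delta>"
  shows "\<bar>young_sum g b t P - young_sum g b t Q\<bar>
    \<le> 2 * young_loeve_constant (\<alpha> + \<beta>) * Kg * Kb * \<delta> powr (\<alpha> + \<beta> - 1) * (t - s)"
proof -
  let ?C = "young_loeve_constant (\<alpha> + \<beta>) * Kg * Kb"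
  have R: "finite_partition s t (P \<union> Q)" using P Q unfolding finite_partition_def by auto
  have C: "0 \<le> ?C" using young_loeve_constant_nonneg[OF pos(3)] K by auto
  have "\<bar>young_sum g b t (P \<union> Q) - young_sum g b t S\<bar> \<le> ?C * (\<delta> powr (\<alpha> + \<beta> - 1) * (t - s))"
    if "finite_partition s t S" "mesh_below S t \<delta>" "S \<subseteq> P \<union> Q" for S
  proof -
    have "\<bar>young_sum g b t (P \<union> Q) - young_sum g b t S\<bar>
        \<le> ?C * partition_sum (\<lambda>x y. (y - x) powr (\<alpha> + \<beta>)) t S"
      using young_sum_refine[OF K pos that(1) R that(3) hg hb] .
    also have "\<dots> \<le> ?C * (\<delta> powr (\<alpha> + \<beta> - 1) * (t - s))"
      using partition_sum_powr_le[OF that(1,2)] pos C by (intro mult_left_mono) auto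
    finally show ?thesis .
  qed
  from this[OF P] this[OF Q] show ?thesis by (simp add: algebra_simps)
qed

section \<open>The Young integral\<close>

definition uniform_partition :: "real \<Rightarrow> real \<Rightarrow> nat \<Rightarrow> real set" where
  "uniform_partition s t n = (\<lambda>k. s + real k * (t - s) / real (Suc n)) ` {0..Suc n}"

lemma finite_partition_uniform: "s \<le> t \<Longrightarrow> finite_partition s t (uniform_partition s t n)"
proof -
  assume st: "s \<le> t"
  have "real k * (t - s) / real (Suc n) \<le> t - s" if "k \<le> Suc n" for k
  proof -
    have "real k * (t - s) \<le> real (Suc n) * (t - s)" using that st by (intro mult_right_mono) auto
    then have "real k * (t - s) / real (Suc n) \<le> real (Suc n) * (t - s) / real (Suc n)"
      by (intro divide_right_mono) auto
    then show ?thesis by simp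
  qed
  moreover have "t \<in> uniform_partition s t n" unfolding uniform_partition_def
    by (rule image_eqI[of _ _ "Suc n"]) auto
  moreover have "s \<in> uniform_partition s t n" unfolding uniform_partition_def
    by (rule image_eqI[of _ _ 0]) auto
  ultimately show ?thesis using st unfolding finite_partition_def uniform_partition_def by force
qed

lemma eventually_mesh_below_uniform:
  assumes st: "s \<le> t" and \<delta>: "0 < \<delta>"
  shows "eventually (\<lambda>n. mesh_below (uniform_partition s t n) t \<delta>) sequentially"
proof -
  obtain N :: nat where N: "(t - s) / \<delta> < real N" using reals_Archimedean2 by blast
  have "mesh_below (uniform_partition s t n) t \<delta>" if "N \<le> n" for n
    unfolding mesh_below_def
  proof
    fix x assume x: "x \<in> uniform_partition s t n - {t}"
    then obtain k where k: "k \<le> Suc n" "x = s + real k * (t - s) / real (Suc n)"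
      unfolding uniform_partition_def by auto
    have P: "finite_partition s t (uniform_partition s t n)" using finite_partition_uniform[OF st] .
    have "x < t" using x P unfolding finite_partition_def by fastforce
    then have "k \<noteq> Suc n" "s < t" using x k P unfolding finite_partition_def by auto
    let ?y = "s + real (Suc k) * (t - s) / real (Suc n)"
    have y: "?y \<in> uniform_partition s t n" unfolding uniform_partition_def
      by (rule image_eqI[of _ _ "Suc k"]) (use k \<open>k \<noteq> Suc n\<close> in auto)
    have xy: "?y = x + (t - s) / real (Suc n)" using k by (simp add: field_simps)
    have "t - s < real N * \<delta>" using N \<delta> by (simp add: divide_less_eq)
    also have "\<dots> \<le> real (Suc n) * \<delta>" using that \<delta> by (intro mult_right_mono) auto
    finally have "(t - s) / real (Suc n) < \<delta>" by (simp add: divide_less_eq algebra_simps)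
    moreover have "next_point (uniform_partition s t n) x \<le> ?y"
      using finite_partition_next_point(4)[OF P _ \<open>x < t\<close> y] x xy \<open>s < t\<close> by auto
    ultimately show "next_point (uniform_partition s t n) x - x < \<delta>" using xy by simp
  qed
  then show ?thesis unfolding eventually_sequentially by blast
qed

definition young_integral :: "(real \<Rightarrow> real) \<Rightarrow> (real \<Rightarrow> real) \<Rightarrow> real \<Rightarrow> real \<Rightarrow> real" where
  "young_integral g b s t = lim (\<lambda>n. young_sum g b t (uniform_partition s t n))"

lemma young_integral_trivial: "young_integral g b s s = 0"
proof -
  have "uniform_partition s s n = {s}" for n
    using finite_partition_uniform[of s s n] finite_partition_trivial_iff by auto
  then show ?thesis unfolding young_integral_def by (simp add: young_sum_def partition_sum_trivial)
qed

lemma young_integral_cong: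
  assumes "\<And>x. x \<in> {s..t} \<Longrightarrow> g1 x = g2 x" "s \<le> t"
  shows "young_integral g1 b s t = young_integral g2 b s t"
proof -
  have "young_sum g1 b t P = young_sum g2 b t P" if "finite_partition s t P" for P
    using that assms unfolding young_sum_def partition_sum_def finite_partition_def by (intro sum.cong) auto
  then show ?thesis unfolding young_integral_def using finite_partition_uniform[OF assms(2)] by simp
qed

lemma young_sums_uniform_tendsto:
  assumes "s \<le> t" and conv: "\<And>\<epsilon>. 0 < \<epsilon> \<Longrightarrow> \<exists>\<delta>>0. \<forall>P. finite_partition s t P \<and> mesh_below P t \<delta>
      \<longrightarrow> \<bar>young_sum g b t P - I\<bar> < \<epsilon>"
  shows "(\<lambda>n. young_sum g b t (uniform_partition s t n)) \<longlonglongrightarrow> I"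
proof (rule LIMSEQ_I)
  fix r :: real assume "0 < r"
  then obtain \<delta> where \<delta>: "\<delta> > 0"
    "\<And>P. finite_partition s t P \<and> mesh_below P t \<delta> \<Longrightarrow> \<bar>young_sum g b t P - I\<bar> < r"
    using conv by blast
  obtain N where "\<forall>n\<ge>N. mesh_below (uniform_partition s t n) t \<delta>"
    using eventually_mesh_below_uniform[OF assms(1) \<delta>(1)] unfolding eventually_sequentially by blast
  then show "\<exists>N. \<forall>n\<ge>N. norm (young_sum g b t (uniform_partition s t n) - I) < r"
    using \<delta>(2) finite_partition_uniform[OF assms(1)] by auto
qed

lemma young_sums_uniform_tendsto_young_integral:
  fixes g b :: "real \<Rightarrow> real"
  assumes hg: "holder_with \<alpha> Kg s t g" and hb: "holder_with \<beta> Kb s t b" and K: "0 \<le> Kg" "0 \<le> Kb"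
    and pos: "0 < \<alpha>" "0 < \<beta>" "1 < \<alpha> + \<beta>" and st: "s \<le> t"
  shows "(\<lambda>n. young_sum g b t (uniform_partition s t n)) \<longlonglongrightarrow> young_integral g b s t"
proof -
  let ?S = "\<lambda>n. young_sum g b t (uniform_partition s t n)"
  define C where "C = 2 * young_loeve_constant (\<alpha> + \<beta>) * Kg * Kb * (t - s)"
  have "Cauchy ?S"
  proof (rule metric_CauchyI)
    fix e :: real assume "0 < e"
    then obtain \<delta> where \<delta>: "\<delta> > 0" "C * \<delta> powr (\<alpha> + \<beta> - 1) < e"
      using exists_small_powr[of e "\<alpha> + \<beta> - 1" C] pos by auto
    then obtain N where "\<forall>n\<ge>N. mesh_below (uniform_partition s t n) t \<delta>"
      using eventually_mesh_below_uniform[OF st] unfolding eventually_sequentially by blast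
    then have "dist (?S m) (?S n) < e" if "N \<le> m" "N \<le> n" for m n
      using young_sum_cauchy[OF hg hb K pos finite_partition_uniform[OF st] _ finite_partition_uniform[OF st],
          of m \<delta> n] that \<delta> unfolding C_def dist_real_def by (simp add: algebra_simps)
    then show "\<exists>M. \<forall>m\<ge>M. \<forall>n\<ge>M. dist (?S m) (?S n) < e" by blast
  qed
  then show ?thesis unfolding young_integral_def by (simp add: Cauchy_convergent_iff convergent_LIMSEQ_iff)
qed

lemma next_point_sorted_list:
  fixes p :: "real list"
  assumes so: "sorted_wrt (<) p" and i: "Suc i < length p"
  shows "next_point (set p) (p ! i) = p ! Suc i"
proof (rule next_point_eqI)
  show "p ! i < p ! Suc i" using so i by (simp add: sorted_wrt_nth_less)
  fix y assume y: "y \<in> set p" "p ! i < y"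
  then obtain j where j: "j < length p" "y = p ! j" by (auto simp: in_set_conv_nth)
  then have "i < j" using y(2) sorted_nth_mono[OF strict_sorted_imp_sorted[OF so], of j i] i by fastforce
  then show "p ! Suc i \<le> y" using sorted_nth_mono[OF strict_sorted_imp_sorted[OF so], of "Suc i" j] j by simp
qed (use i in auto)

lemma sorted_list_set_minus_last:
  fixes p :: "real list"
  assumes so: "sorted_wrt (<) p" and ne: "p \<noteq> []"
  shows "set p - {last p} = (\<lambda>i. p ! i) ` {..<length p - 1}"
proof -
  have d: "distinct p" using so by (simp add: strict_sorted_iff)
  have l: "last p = p ! (length p - 1)" using ne by (simp add: last_conv_nth)
  show ?thesis
  proof (intro set_eqI iffI)
    fix x assume x: "x \<in> set p - {last p}"
    then obtain j where "j < length p" "p ! j = x" by (auto simp: in_set_conv_nth)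
    moreover have "j \<noteq> length p - 1" using x l calculation by auto
    ultimately show "x \<in> (\<lambda>i. p ! i) ` {..<length p - 1}" by force
  next
    fix x assume "x \<in> (\<lambda>i. p ! i) ` {..<length p - 1}"
    then obtain j where "j < length p - 1" "x = p ! j" by auto
    then show "x \<in> set p - {last p}" using d ne l by (auto simp: nth_eq_iff_index_eq)
  qed
qed

lemma riemann_sum_eq_young_sum:
  fixes p :: "real list"
  assumes so: "sorted_wrt (<) p" and ne: "p \<noteq> []"
  shows "riemann_sum g b p = young_sum g b (last p) (set p)"
    and "mesh_less p \<delta> \<longleftrightarrow> mesh_below (set p) (last p) \<delta>"
proof -
  have "inj_on (\<lambda>i. p ! i) {..<length p - 1}"
    using so by (auto simp: inj_on_def nth_eq_iff_index_eq strict_sorted_iff)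
  then show "riemann_sum g b p = young_sum g b (last p) (set p)"
    unfolding young_sum_def partition_sum_def riemann_sum_def sorted_list_set_minus_last[OF so ne]
    using next_point_sorted_list[OF so] by (simp add: sum.reindex)
  show "mesh_less p \<delta> \<longleftrightarrow> mesh_below (set p) (last p) \<delta>"
    unfolding mesh_less_def mesh_below_def sorted_list_set_minus_last[OF so ne]
    using next_point_sorted_list[OF so] by auto
qed

lemma sorted_list_hd_last_bounds:
  fixes p :: "real list"
  assumes so: "sorted_wrt (<) p" and ne: "p \<noteq> []" and x: "x \<in> set p"
  shows "hd p \<le> x" "x \<le> last p"
proof -
  obtain j where j: "j < length p" "x = p ! j" using x by (auto simp: in_set_conv_nth)
  show "hd p \<le> x" using sorted_nth_mono[OF strict_sorted_imp_sorted[OF so], of 0 j] j ne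
    by (simp add: hd_conv_nth)
  show "x \<le> last p" using sorted_nth_mono[OF strict_sorted_imp_sorted[OF so], of j "length p - 1"] j ne
    by (simp add: last_conv_nth)
qed

lemma is_partition_iff_finite_partition:
  fixes p :: "real list"
  assumes so: "sorted_wrt (<) p" and ne: "p \<noteq> []"
  shows "is_partition s t p \<longleftrightarrow> finite_partition s t (set p) \<and> last p = t"
proof
  assume "is_partition s t p"
  then have "hd p = s" "last p = t" unfolding is_partition_def by auto
  then show "finite_partition s t (set p) \<and> last p = t"
    using sorted_list_hd_last_bounds[OF so ne] hd_in_set[OF ne] last_in_set[OF ne]
    unfolding finite_partition_def by auto
next
  assume P: "finite_partition s t (set p) \<and> last p = t"
  have "hd p \<le> s" using sorted_list_hd_last_bounds(1)[OF so ne] P unfolding finite_partition_def by auto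
  moreover have "s \<le> hd p" using hd_in_set[OF ne] P unfolding finite_partition_def by auto
  ultimately show "is_partition s t p" using P so ne unfolding is_partition_def by auto
qed

lemma has_young_integral_iff_finite_partitions:
  assumes st: "s \<le> t"
  shows "has_young_integral g b s t I \<longleftrightarrow>
    (\<forall>\<epsilon>>0. \<exists>\<delta>>0. \<forall>P. finite_partition s t P \<and> mesh_below P t \<delta> \<longrightarrow> \<bar>young_sum g b t P - I\<bar> < \<epsilon>)"
proof -
  have lists: "(\<forall>p. is_partition s t p \<and> mesh_less p \<delta> \<longrightarrow> \<bar>riemann_sum g b p - I\<bar> < \<epsilon>) \<longleftrightarrow>
      (\<forall>P. finite_partition s t P \<and> mesh_below P t \<delta> \<longrightarrow> \<bar>young_sum g b t P - I\<bar> < \<epsilon>)" for \<delta> \<epsilon>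
  proof safe
    fix P assume H: "\<forall>p. is_partition s t p \<and> mesh_less p \<delta> \<longrightarrow> \<bar>riemann_sum g b p - I\<bar> < \<epsilon>"
      and P: "finite_partition s t P" "mesh_below P t \<delta>"
    define p where "p = sorted_list_of_set P"
    have fin: "finite P" and tP: "t \<in> P" using P unfolding finite_partition_def by auto
    have sp: "set p = P" and so: "sorted_wrt (<) p" unfolding p_def using fin by auto
    then have ne: "p \<noteq> []" using tP by auto
    have "last p \<le> t" using last_in_set[OF ne] P sp unfolding finite_partition_def by auto
    moreover have "t \<le> last p" using sorted_list_hd_last_bounds(2)[OF so ne] tP sp by auto
    ultimately have "last p = t" by simp
    then have "is_partition s t p \<and> mesh_less p \<delta>"
      using P is_partition_iff_finite_partition[OF so ne] riemann_sum_eq_young_sum(2)[OF so ne] sp by auto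
    then show "\<bar>young_sum g b t P - I\<bar> < \<epsilon>"
      using H riemann_sum_eq_young_sum(1)[OF so ne] sp \<open>last p = t\<close> by auto
  next
    fix p assume H: "\<forall>P. finite_partition s t P \<and> mesh_below P t \<delta> \<longrightarrow> \<bar>young_sum g b t P - I\<bar> < \<epsilon>"
      and "is_partition s t p" "mesh_less p \<delta>"
    moreover from this have so: "sorted_wrt (<) p" and ne: "p \<noteq> []" unfolding is_partition_def by auto
    ultimately show "\<bar>riemann_sum g b p - I\<bar> < \<epsilon>"
      using is_partition_iff_finite_partition[OF so ne] riemann_sum_eq_young_sum[OF so ne] by auto
  qed
  show ?thesis unfolding has_young_integral_def lists ..
qed

lemma young_integral_eqI:
  assumes "has_young_integral g b s t I" "s \<le> t"
  shows "young_integral g b s t = I"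
  unfolding young_integral_def
  using young_sums_uniform_tendsto[OF assms(2)] assms has_young_integral_iff_finite_partitions[OF assms(2)]
  by (blast intro: limI)

theorem has_young_integral_young_integral:
  fixes g b :: "real \<Rightarrow> real"
  assumes hg: "holder_with \<alpha> Kg s t g" and hb: "holder_with \<beta> Kb s t b" and K: "0 \<le> Kg" "0 \<le> Kb"
    and pos: "0 < \<alpha>" "0 < \<beta>" "1 < \<alpha> + \<beta>" and st: "s \<le> t"
  shows "has_young_integral g b s t (young_integral g b s t)"
  unfolding has_young_integral_iff_finite_partitions[OF st]
proof (intro allI impI)
  fix e :: real assume e: "0 < e"
  let ?S = "\<lambda>n. young_sum g b t (uniform_partition s t n)"
  define C where "C = 2 * young_loeve_constant (\<alpha> + \<beta>) * Kg * Kb * (t - s)"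
  obtain \<delta> where \<delta>: "\<delta> > 0" "C * \<delta> powr (\<alpha> + \<beta> - 1) < e / 2"
    using exists_small_powr[of "e / 2" "\<alpha> + \<beta> - 1" C] e pos by auto
  obtain N1 where N1: "\<forall>n\<ge>N1. mesh_below (uniform_partition s t n) t \<delta>"
    using eventually_mesh_below_uniform[OF st \<delta>(1)] unfolding eventually_sequentially by blast
  obtain N2 where N2: "\<forall>n\<ge>N2. norm (?S n - young_integral g b s t) < e / 2"
    using LIMSEQ_D[OF young_sums_uniform_tendsto_young_integral[OF hg hb K pos st], of "e / 2"] e by auto
  have "\<bar>young_sum g b t P - young_integral g b s t\<bar> < e"
    if P: "finite_partition s t P" "mesh_below P t \<delta>" for P
  proof -
    let ?n = "max N1 N2"
    have "\<bar>young_sum g b t P - ?S ?n\<bar> \<le> C * \<delta> powr (\<alpha> + \<beta> - 1)"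
      using young_sum_cauchy[OF hg hb K pos P finite_partition_uniform[OF st]] N1
      unfolding C_def by (simp add: algebra_simps)
    moreover have "\<bar>?S ?n - young_integral g b s t\<bar> < e / 2" using N2 by auto
    ultimately show ?thesis using \<delta> by linarith
  qed
  then show "\<exists>\<delta>>0. \<forall>P. finite_partition s t P \<and> mesh_below P t \<delta> \<longrightarrow>
      \<bar>young_sum g b t P - young_integral g b s t\<bar> < e" using \<delta>(1) by blast
qed

lemma has_young_integral_additive:
  assumes I1: "has_young_integral g b s u I1" and I2: "has_young_integral g b u t I2"
    and I: "has_young_integral g b s t I" and su: "s \<le> u" and ut: "u \<le> t"
  shows "I = I1 + I2"
proof -
  have st: "s \<le> t" using su ut by simp
  have "\<bar>I - (I1 + I2)\<bar> \<le> 0"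
  proof (rule field_le_epsilon)
    fix e :: real assume "0 < e"
    then have e: "0 < e / 3" by simp
    obtain d1 where d1: "d1 > 0"
      "\<And>P. finite_partition s u P \<and> mesh_below P u d1 \<Longrightarrow> \<bar>young_sum g b u P - I1\<bar> < e / 3"
      using I1 e unfolding has_young_integral_iff_finite_partitions[OF su] by blast
    obtain d2 where d2: "d2 > 0"
      "\<And>P. finite_partition u t P \<and> mesh_below P t d2 \<Longrightarrow> \<bar>young_sum g b t P - I2\<bar> < e / 3"
      using I2 e unfolding has_young_integral_iff_finite_partitions[OF ut] by blast
    obtain d3 where d3: "d3 > 0"
      "\<And>P. finite_partition s t P \<and> mesh_below P t d3 \<Longrightarrow> \<bar>young_sum g b t P - I\<bar> < e / 3"
      using I e unfolding has_young_integral_iff_finite_partitions[OF st] by blast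
    define d where "d = min d1 (min d2 d3)"
    have d: "d > 0" "d \<le> d1" "d \<le> d2" "d \<le> d3" using d1 d2 d3 unfolding d_def by auto
    obtain n1 where n1: "mesh_below (uniform_partition s u n1) u d"
      using eventually_mesh_below_uniform[OF su d(1)] eventually_sequentially by auto
    obtain n2 where n2: "mesh_below (uniform_partition u t n2) t d"
      using eventually_mesh_below_uniform[OF ut d(1)] eventually_sequentially by auto
    define P1 where "P1 = uniform_partition s u n1"
    define P2 where "P2 = uniform_partition u t n2"
    have P1: "finite_partition s u P1" and P2: "finite_partition u t P2"
      unfolding P1_def P2_def using finite_partition_uniform su ut by auto
    note P = finite_partition_union[OF P1 P2]
    have uP: "u \<in> P1 \<union> P2" using P1 unfolding finite_partition_def by auto
    have "young_sum g b t (P1 \<union> P2) = young_sum g b u P1 + young_sum g b t P2"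
      using partition_sum_split[OF P(1) uP] unfolding young_sum_def P(2,3) .
    moreover have "\<bar>young_sum g b u P1 - I1\<bar> < e / 3"
      using d1(2)[of P1] P1 mesh_below_mono[OF n1 d(2)] unfolding P1_def by auto
    moreover have "\<bar>young_sum g b t P2 - I2\<bar> < e / 3"
      using d2(2)[of P2] P2 mesh_below_mono[OF n2 d(3)] unfolding P2_def by auto
    moreover have "mesh_below (P1 \<union> P2) t d"
      using mesh_below_split[OF P(1) uP, unfolded P(2,3)] n1 n2 unfolding P1_def P2_def by blast
    then have "\<bar>young_sum g b t (P1 \<union> P2) - I\<bar> < e / 3"
      using d3(2) P(1) mesh_below_mono[OF _ d(4)] by blast
    ultimately show "\<bar>I - (I1 + I2)\<bar> \<le> 0 + e" by linarith
  qed
  then show ?thesis by simp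
qed

lemma has_young_integral_diff:
  assumes I1: "has_young_integral g1 b s t I1" and I2: "has_young_integral g2 b s t I2"
  shows "has_young_integral (\<lambda>x. g1 x - g2 x) b s t (I1 - I2)"
  unfolding has_young_integral_def
proof (intro allI impI)
  fix e :: real assume e: "0 < e"
  obtain d1 where d1: "d1 > 0"
    "\<And>p. is_partition s t p \<and> mesh_less p d1 \<Longrightarrow> \<bar>riemann_sum g1 b p - I1\<bar> < e / 2"
    using I1 e unfolding has_young_integral_def by (meson half_gt_zero)
  obtain d2 where d2: "d2 > 0"
    "\<And>p. is_partition s t p \<and> mesh_less p d2 \<Longrightarrow> \<bar>riemann_sum g2 b p - I2\<bar> < e / 2"
    using I2 e unfolding has_young_integral_def by (meson half_gt_zero)
  have "\<bar>riemann_sum (\<lambda>x. g1 x - g2 x) b p - (I1 - I2)\<bar> < e"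
    if "is_partition s t p" "mesh_less p (min d1 d2)" for p
  proof -
    have "mesh_less p d1" "mesh_less p d2" using that(2) unfolding mesh_less_def by fastforce+
    then have "\<bar>riemann_sum g1 b p - I1\<bar> < e / 2" "\<bar>riemann_sum g2 b p - I2\<bar> < e / 2"
      using d1(2) d2(2) that(1) by auto
    moreover have "riemann_sum (\<lambda>x. g1 x - g2 x) b p = riemann_sum g1 b p - riemann_sum g2 b p"
      unfolding riemann_sum_def by (simp add: left_diff_distrib sum_subtractf)
    ultimately show ?thesis by linarith
  qed
  then show "\<exists>\<delta>>0. \<forall>p. is_partition s t p \<and> mesh_less p \<delta> \<longrightarrow>
      \<bar>riemann_sum (\<lambda>x. g1 x - g2 x) b p - (I1 - I2)\<bar> < e"
    using d1(1) d2(1) by (intro exI[of _ "min d1 d2"]) auto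
qed

theorem has_young_integral_estimate:
  fixes g b :: "real \<Rightarrow> real"
  assumes I: "has_young_integral g b s t I"
    and hg: "holder_with \<alpha> Kg s t g" and hb: "holder_with \<beta> Kb s t b" and K: "0 \<le> Kg" "0 \<le> Kb"
    and pos: "0 < \<alpha>" "0 < \<beta>" "1 < \<alpha> + \<beta>" and st: "s \<le> t"
  shows "\<bar>I - g s * (b t - b s)\<bar> \<le> young_loeve_constant (\<alpha> + \<beta>) * Kg * Kb * (t - s) powr (\<alpha> + \<beta>)"
proof -
  have "(\<lambda>n. young_sum g b t (uniform_partition s t n) - g s * (b t - b s)) \<longlonglongrightarrow> I - g s * (b t - b s)"
    using young_sums_uniform_tendsto[OF st] I unfolding has_young_integral_iff_finite_partitions[OF st]
    by (intro tendsto_diff tendsto_const) blast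
  then show ?thesis
    using young_loeve_estimate[OF hg hb K pos finite_partition_uniform[OF st]]
    by (intro LIMSEQ_le_const2[OF tendsto_rabs]) auto
qed

text \<open>The Young sums of the germ telescope to \<open>F t - F s\<close> up to an error
  \<open>K \<delta>\<^sup>\<theta>\<^sup>-\<^sup>1 (t - s)\<close> on partitions of mesh \<open>\<delta>\<close>.\<close>

theorem sewing_lemma:
  fixes F g b :: "real \<Rightarrow> real"
  assumes th: "1 < \<theta>" and st: "s \<le> t"
    and germ: "\<And>u v. s \<le> u \<Longrightarrow> u \<le> v \<Longrightarrow> v \<le> t \<Longrightarrow> \<bar>F v - F u - g u * (b v - b u)\<bar> \<le> K * (v - u) powr \<theta>"
  shows "has_young_integral g b s t (F t - F s)"
  unfolding has_young_integral_iff_finite_partitions[OF st]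
proof (intro allI impI)
  fix e :: real assume e: "0 < e"
  define K' where "K' = max K 0"
  have K': "0 \<le> K'" unfolding K'_def by auto
  have germ': "\<bar>F v - F u - g u * (b v - b u)\<bar> \<le> K' * (v - u) powr \<theta>" if "s \<le> u" "u \<le> v" "v \<le> t" for u v
    using germ[OF that] mult_right_mono[of K K' "(v - u) powr \<theta>"] unfolding K'_def by fastforce
  obtain d where d: "d > 0" "K' * (t - s) * d powr (\<theta> - 1) < e"
    using exists_small_powr[of e "\<theta> - 1" "K' * (t - s)"] e th by auto
  have "\<bar>young_sum g b t P - (F t - F s)\<bar> < e" if P: "finite_partition s t P" "mesh_below P t d" for P
  proof -
    have "partition_sum (\<lambda>x y. F y - F x - g x * (b y - b x)) t P
        = partition_sum (\<lambda>x y. F y - F x) t P - partition_sum (\<lambda>x y. g x * (b y - b x)) t P"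
      by (rule partition_sum_diff)
    then have "F t - F s - young_sum g b t P = partition_sum (\<lambda>x y. F y - F x - g x * (b y - b x)) t P"
      unfolding young_sum_def partition_sum_telescope[OF P(1)] by simp
    also have "\<bar>\<dots>\<bar> \<le> partition_sum (\<lambda>x y. K' * (y - x) powr \<theta>) t P"
    proof (rule partition_sum_abs_le)
      fix x assume x: "x \<in> P - {t}"
      then have "s \<le> x" "x < t" using P unfolding finite_partition_def by auto
      then show "\<bar>F (next_point P x) - F x - g x * (b (next_point P x) - b x)\<bar> \<le> K' * (next_point P x - x) powr \<theta>"
        using germ' finite_partition_next_point[OF P(1)] x by (simp add: less_imp_le)
    qed
    also have "\<dots> = K' * partition_sum (\<lambda>x y. (y - x) powr \<theta>) t P"
      unfolding partition_sum_def by (simp add: sum_distrib_left)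
    also have "\<dots> \<le> K' * (d powr (\<theta> - 1) * (t - s))"
      using partition_sum_powr_le[OF P] th K' by (intro mult_left_mono) auto
    finally show ?thesis using d by (simp add: algebra_simps)
  qed
  then show "\<exists>\<delta>>0. \<forall>P. finite_partition s t P \<and> mesh_below P t \<delta> \<longrightarrow> \<bar>young_sum g b t P - (F t - F s)\<bar> < e"
    using d(1) by blast
qed

lemma remainder_concat:
  fixes X G b :: "real \<Rightarrow> real"
  assumes R1: "\<And>u v. p \<le> u \<Longrightarrow> u \<le> v \<Longrightarrow> v \<le> q \<Longrightarrow> \<bar>X v - X u - G u * (b v - b u)\<bar> \<le> K1 * (v - u) powr \<theta>"
    and R2: "\<And>u v. q \<le> u \<Longrightarrow> u \<le> v \<Longrightarrow> v \<le> r \<Longrightarrow> \<bar>X v - X u - G u * (b v - b u)\<bar> \<le> K2 * (v - u) powr \<theta>"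
    and hG: "holder_with \<alpha> KG p r G" and hb: "holder_with \<beta> Kb p r b" and \<theta>: "\<theta> = \<alpha> + \<beta>"
    and K: "0 \<le> K1" "0 \<le> K2" "0 \<le> KG" "0 \<le> Kb" and pos: "0 \<le> \<alpha>" "0 \<le> \<beta>"
    and uv: "p \<le> u" "u \<le> v" "v \<le> r"
  shows "\<bar>X v - X u - G u * (b v - b u)\<bar> \<le> (K1 + K2 + KG * Kb) * (v - u) powr \<theta>"
proof -
  have mono: "K * (y - x) powr \<theta> \<le> K * (v - u) powr \<theta>" if "0 \<le> K" "u \<le> x" "x \<le> y" "y \<le> v" for K x y
    using that pos \<theta> by (intro mult_left_mono powr_mono2) auto
  have sum: "K * (v - u) powr \<theta> \<le> (K1 + K2 + KG * Kb) * (v - u) powr \<theta>" if "K \<le> K1 + K2 + KG * Kb" for K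
    using that by (intro mult_right_mono) auto
  consider "v \<le> q" | "q \<le> u" | "u < q" "q < v" by linarith
  then show ?thesis
  proof cases
    case 1
    then show ?thesis using order_trans[OF R1[OF uv(1,2) 1] sum[of K1]] K by simp
  next
    case 2
    then show ?thesis using order_trans[OF R2[OF 2 uv(2,3)] sum[of K2]] K by simp
  next
    case 3
    have "X v - X u - G u * (b v - b u)
        = (X q - X u - G u * (b q - b u)) + (X v - X q - G q * (b v - b q)) + (G q - G u) * (b v - b q)"
      by (simp add: algebra_simps)
    moreover have "\<bar>X q - X u - G u * (b q - b u)\<bar> \<le> K1 * (v - u) powr \<theta>"
      using order_trans[OF R1[OF uv(1)] mono[of K1 u q]] 3 K by simp
    moreover have "\<bar>X v - X q - G q * (b v - b q)\<bar> \<le> K2 * (v - u) powr \<theta>"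
      using order_trans[OF R2[OF _ _ uv(3)] mono[of K2 q v]] 3 K by simp
    moreover have "\<bar>(G q - G u) * (b v - b q)\<bar> \<le> KG * Kb * (v - u) powr \<theta>"
      using holder_product_increment[OF hG hb K(3,4) pos, of u q v] uv 3 \<theta> by auto
    ultimately show ?thesis by (simp add: algebra_simps)
  qed
qed

lemma real_induct_steps:
  fixes P :: "real \<Rightarrow> bool"
  assumes h: "0 < h" and T: "0 \<le> T" and base: "P 0"
    and step: "\<And>s. 0 \<le> s \<Longrightarrow> s < T \<Longrightarrow> P s \<Longrightarrow> P (min (s + h) T)"
  shows "P T"
proof -
  have "P (min (real k * h) T)" for k
  proof (induction k)
    case 0
    show ?case using base T by (simp add: min_def)
  next
    case (Suc k)
    show ?case
    proof (cases "T \<le> real k * h")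
      case True
      moreover have "T \<le> real (Suc k) * h" using True h by (simp add: distrib_right)
      ultimately show ?thesis using Suc by (simp add: min_absorb2)
    next
      case False
      then show ?thesis using step[of "real k * h"] Suc h by (simp add: distrib_right add.commute)
    qed
  qed
  moreover obtain k :: nat where "T / h \<le> real k" using real_arch_simple by blast
  then have "min (real k * h) T = T" using h by (simp add: divide_le_eq)
  ultimately show ?thesis by metis
qed

section \<open>The delay equation driven by a Hoelder path\<close>

text \<open>Hypothesis (B) is only needed for \<open>a\<^sub>1 = 0\<close>, \<open>a\<^sub>2 = T\<close> and \<open>\<rho> = \<xi>\<close>; the driver \<open>b\<close> is any
  \<open>gam\<close>-Hoelder path with \<open>lam < gam\<close>.\<close>

locale delay_young_equation =
  fixes \<tau> T lam gam M1 :: real and \<xi> b :: "real \<Rightarrow> real" and f :: "(real \<Rightarrow> real) \<Rightarrow> real"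
  assumes tau: "0 < \<tau>" and T: "0 < T" and exponents: "1/2 < lam" "lam < gam"
    and b_holder: "holder_on gam 0 T b" and xi_holder: "holder_on lam (-\<tau>) 0 \<xi>"
    and M1: "0 < M1"
    and f_lipschitz: "\<And>\<psi>1 \<psi>2. holder_on lam (-\<tau>) 0 \<psi>1 \<Longrightarrow> holder_on lam (-\<tau>) 0 \<psi>2 \<Longrightarrow>
      \<bar>f \<psi>2 - f \<psi>1\<bar> \<le> M1 * sup_norm (-\<tau>) 0 (\<lambda>x. \<psi>2 x - \<psi>1 x)"
    and f_local_lipschitz: "\<And>N::nat. N \<ge> 1 \<Longrightarrow> (\<exists>c>0. \<forall>Z W.
      Z \<in> holder_rho lam \<tau> \<xi> 0 T \<and> W \<in> holder_rho lam \<tau> \<xi> 0 T \<and>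
      max (holder_semi lam (0 - \<tau>) T Z) (holder_semi lam (0 - \<tau>) T W) \<le> real N \<longrightarrow>
      holder_semi lam 0 T (\<lambda>s. f (seg \<tau> Z s) - f (seg \<tau> W s)) \<le> c * holder_semi lam (0 - \<tau>) T (\<lambda>x. Z x - W x))"
begin

definition integrand :: "(real \<Rightarrow> real) \<Rightarrow> real \<Rightarrow> real" where
  "integrand X = (\<lambda>s. f (seg \<tau> X s))"

definition Kb :: real where "Kb = holder_semi gam 0 T b"

definition Kxi :: real where "Kxi = holder_semi lam (-\<tau>) 0 \<xi>"

abbreviation CY :: real where "CY \<equiv> young_loeve_constant (lam + gam)"

lemma exponents_pos: "0 < lam" "0 < gam" "1 < lam + gam"
  using exponents by auto

lemma CY_nonneg: "0 \<le> CY"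
  using young_loeve_constant_nonneg exponents_pos by auto

lemma b_holder_with: "holder_with gam Kb 0 T b" "0 \<le> Kb"
  unfolding Kb_def using holder_with_holder_semi[OF b_holder] holder_semi_nonneg[OF T b_holder] by auto

lemma xi_holder_with: "holder_with lam Kxi (-\<tau>) 0 \<xi>" "0 \<le> Kxi"
  unfolding Kxi_def using holder_with_holder_semi[OF xi_holder] holder_semi_nonneg[OF _ xi_holder] tau by auto

lemma b_holder_sub: "0 \<le> u \<Longrightarrow> v \<le> T \<Longrightarrow> holder_with gam Kb u v b"
  using holder_with_subinterval[OF b_holder_with(1)] by auto

lemma integrand_holder:
  assumes h: "holder_with lam K (a - \<tau>) c X" and ac: "a \<le> c"
  shows "holder_with lam (M1 * K) a c (integrand X)"
  unfolding holder_with_def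
proof (intro ballI)
  fix x y assume xy: "x \<in> {a..c}" "y \<in> {a..c}"
  have seg: "holder_on lam (-\<tau>) 0 (seg \<tau> X s)" if s: "s \<in> {a..c}" for s
    unfolding holder_on_iff_holder_with
  proof (intro exI[of _ K], rule holder_withI)
    fix u v assume "- \<tau> \<le> u" "u \<le> v" "v \<le> 0"
    then show "\<bar>seg \<tau> X s v - seg \<tau> X s u\<bar> \<le> K * (v - u) powr lam"
      using holder_withD[OF h, of "s + v" "s + u"] s unfolding seg_def by auto
  qed
  have "sup_norm (-\<tau>) 0 (\<lambda>z. seg \<tau> X x z - seg \<tau> X y z) \<le> K * \<bar>x - y\<bar> powr lam"
    unfolding sup_norm_def
  proof (rule cSUP_least)
    fix z assume z: "z \<in> {-\<tau>..0}"
    have "\<bar>X (x + z) - X (y + z)\<bar> \<le> K * \<bar>(x + z) - (y + z)\<bar> powr lam"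
      using xy z by (intro holder_withD[OF h]) auto
    then show "\<bar>seg \<tau> X x z - seg \<tau> X y z\<bar> \<le> K * \<bar>x - y\<bar> powr lam" using z unfolding seg_def by simp
  qed (use tau in auto)
  then have "\<bar>f (seg \<tau> X x) - f (seg \<tau> X y)\<bar> \<le> M1 * (K * \<bar>x - y\<bar> powr lam)"
    using f_lipschitz[OF seg[OF xy(2)] seg[OF xy(1)]] M1 by (meson mult_left_mono less_imp_le order_trans)
  then show "\<bar>integrand X x - integrand X y\<bar> \<le> M1 * K * \<bar>x - y\<bar> powr lam" unfolding integrand_def by simp
qed

lemma integrand_cong:
  assumes "\<And>x. x \<in> {s - \<tau>..s} \<Longrightarrow> X x = Y x"
  shows "integrand X s = integrand Y s"
proof -
  have "seg \<tau> X s = seg \<tau> Y s" unfolding seg_def using assms by (intro ext) auto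
  then show ?thesis unfolding integrand_def by simp
qed

lemma integrand_bound:
  assumes xi: "\<And>x. x \<in> {-\<tau>..0} \<Longrightarrow> X x = \<xi> x" and h: "holder_with lam K (-\<tau>) u X" and K: "0 \<le> K"
    and u: "0 \<le> u" "u \<le> T"
  shows "\<bar>integrand X u\<bar> \<le> \<bar>integrand \<xi> 0\<bar> + M1 * K * T powr lam"
proof -
  have "\<bar>integrand X u - integrand X 0\<bar> \<le> M1 * K * \<bar>u - 0\<bar> powr lam"
    using u by (intro holder_withD[OF integrand_holder[of K 0 u X]]) (use h in auto)
  also have "\<dots> \<le> M1 * K * T powr lam" using u K M1 exponents_pos by (intro mult_left_mono powr_mono2) auto
  finally show ?thesis using integrand_cong[of 0 X \<xi>] xi by force
qed

lemma has_young_integral_integrand: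
  assumes h: "holder_with lam K (-\<tau>) c X" and K: "0 \<le> K" and uv: "0 \<le> u" "u \<le> v" "v \<le> c" "c \<le> T"
  shows "has_young_integral (integrand X) b u v (young_integral (integrand X) b u v)"
proof -
  have "holder_with lam (M1 * K) u v (integrand X)"
    using uv by (intro integrand_holder holder_with_subinterval[OF h]) auto
  then show ?thesis
    using has_young_integral_young_integral[OF _ b_holder_sub[of u v] _ b_holder_with(2) exponents_pos uv(2)]
      uv K M1 by auto
qed

lemma young_integral_integrand_estimate:
  assumes h: "holder_with lam K (-\<tau>) c X" and K: "0 \<le> K" and uv: "0 \<le> u" "u \<le> v" "v \<le> c" "c \<le> T"
  shows "\<bar>young_integral (integrand X) b u v - integrand X u * (b v - b u)\<bar>
    \<le> CY * (M1 * K) * Kb * (v - u) powr (lam + gam)"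
proof -
  have "holder_with lam (M1 * K) u v (integrand X)"
    using uv by (intro integrand_holder holder_with_subinterval[OF h]) auto
  then show ?thesis
    using has_young_integral_estimate[OF has_young_integral_integrand[OF assms] _ b_holder_sub[of u v] _
        b_holder_with(2) exponents_pos uv(2)] uv K M1 by auto
qed

lemma young_integral_integrand_additive:
  assumes h: "holder_with lam K (-\<tau>) c X" and K: "0 \<le> K" and uv: "0 \<le> s" "s \<le> u" "u \<le> v" "v \<le> c" "c \<le> T"
  shows "young_integral (integrand X) b s v
    = young_integral (integrand X) b s u + young_integral (integrand X) b u v"
  using has_young_integral_additive[OF has_young_integral_integrand[OF h K, of s u]
      has_young_integral_integrand[OF h K, of u v] has_young_integral_integrand[OF h K, of s v]] uv by auto

text \<open>Solutions up to time \<open>a\<close> in controlled form; by the sewing lemma and the Young--Loeve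
  estimate this is equivalent to the integral equation (\<open>is_solution_iff_solves_upto\<close>).\<close>

definition solves_upto :: "real \<Rightarrow> (real \<Rightarrow> real) \<Rightarrow> bool" where
  "solves_upto a X \<longleftrightarrow> (\<exists>K. holder_with lam K (-\<tau>) a X) \<and> (\<forall>x\<in>{-\<tau>..0}. X x = \<xi> x) \<and>
     (\<exists>K\<ge>0. \<forall>u v. 0 \<le> u \<longrightarrow> u \<le> v \<longrightarrow> v \<le> a \<longrightarrow>
        \<bar>X v - X u - integrand X u * (b v - b u)\<bar> \<le> K * (v - u) powr (lam + gam))"

lemma solves_upto_increment:
  assumes "solves_upto a X" "0 \<le> u" "u \<le> v" "v \<le> a"
  shows "young_integral (integrand X) b u v = X v - X u"
proof -
  obtain K where "\<forall>u v. 0 \<le> u \<longrightarrow> u \<le> v \<longrightarrow> v \<le> a \<longrightarrow>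
      \<bar>X v - X u - integrand X u * (b v - b u)\<bar> \<le> K * (v - u) powr (lam + gam)"
    using assms(1) unfolding solves_upto_def by blast
  then have "has_young_integral (integrand X) b u v (X v - X u)"
    using assms by (intro sewing_lemma[OF exponents_pos(3) assms(3), where K=K]) auto
  then show ?thesis using young_integral_eqI assms by blast
qed

lemma young_integral_integrand_bound:
  assumes xi: "\<And>x. x \<in> {-\<tau>..0} \<Longrightarrow> X x = \<xi> x" and X: "holder_with lam K (-\<tau>) c X" and K: "0 \<le> K"
    and uv: "0 \<le> u" "u \<le> v" "v \<le> c" "c \<le> T" "v - u \<le> h"
  shows "\<bar>young_integral (integrand X) b u v\<bar>
    \<le> (Kb * \<bar>integrand \<xi> 0\<bar> * h powr (gam - lam) + K * M1 * Kb * (T powr lam * h powr (gam - lam) + CY * h powr gam))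
      * (v - u) powr lam"
proof -
  let ?d = "(v - u) powr lam"
  have "\<bar>integrand X u\<bar> \<le> \<bar>integrand \<xi> 0\<bar> + M1 * K * T powr lam"
    using integrand_bound[OF xi holder_with_subinterval[OF X, of "-\<tau>" u] K] uv by auto
  moreover have "\<bar>b v - b u\<bar> \<le> Kb * (?d * h powr (gam - lam))"
  proof -
    have "\<bar>b v - b u\<bar> \<le> Kb * (v - u) powr gam" using holder_withD[OF b_holder_with(1), of v u] uv by auto
    also have "\<dots> \<le> Kb * (?d * h powr (gam - lam))"
      using powr_le_mult_powr[of "v - u" h lam gam] uv exponents b_holder_with(2) by (intro mult_left_mono) auto
    finally show ?thesis .
  qed
  ultimately have "\<bar>integrand X u * (b v - b u)\<bar>
      \<le> (\<bar>integrand \<xi> 0\<bar> + M1 * K * T powr lam) * (Kb * (?d * h powr (gam - lam)))"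
    unfolding abs_mult by (intro mult_mono) auto
  moreover have "CY * (M1 * K) * Kb * (v - u) powr (lam + gam) \<le> CY * (M1 * K) * Kb * (?d * h powr gam)"
    using powr_le_mult_powr[of "v - u" h lam "lam + gam"] uv exponents_pos CY_nonneg M1 K b_holder_with(2)
    by (intro mult_left_mono) auto
  moreover have "\<bar>young_integral (integrand X) b u v - integrand X u * (b v - b u)\<bar>
      \<le> CY * (M1 * K) * Kb * (v - u) powr (lam + gam)"
    using young_integral_integrand_estimate[OF X K uv(1-4)] .
  ultimately show ?thesis by (simp add: algebra_simps)
qed

text \<open>On a step \<open>[m, m']\<close> of length at most \<open>h\<close> the seminorm \<open>L\<close> of a solution satisfies
  \<open>L \<le> A + (S + L) / 2\<close>, where \<open>S\<close> is its Hoelder constant on \<open>[-\<tau>, m]\<close>; so the constant at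
  most doubles, plus \<open>2 A\<close>, from step to step.\<close>

lemma solves_upto_holder_step:
  assumes X: "solves_upto a X" and aT: "a \<le> T"
    and S: "holder_with lam S (-\<tau>) m X" "0 \<le> S"
    and m: "0 \<le> m" "m < m'" "m' \<le> a" "m' - m \<le> h"
    and small: "M1 * Kb * (T powr lam * h powr (gam - lam) + CY * h powr gam) \<le> 1/2"
  shows "holder_with lam (2 * S + 2 * (Kb * \<bar>integrand \<xi> 0\<bar> * h powr (gam - lam))) (-\<tau>) m' X"
proof -
  define A where "A = Kb * \<bar>integrand \<xi> 0\<bar> * h powr (gam - lam)"
  have A: "0 \<le> A" unfolding A_def using b_holder_with(2) by simp
  obtain K0 where "holder_with lam K0 (-\<tau>) a X" using X unfolding solves_upto_def by blast
  then have "holder_with lam K0 m m' X" by (rule holder_with_subinterval) (use m tau in auto)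
  then have ho: "holder_on lam m m' X" unfolding holder_on_iff_holder_with by blast
  define L where "L = holder_semi lam m m' X"
  have hL: "holder_with lam L m m' X" unfolding L_def by (rule holder_with_holder_semi[OF ho])
  have L0: "0 \<le> L" unfolding L_def by (rule holder_semi_nonneg[OF m(2) ho])
  have hS: "holder_with lam (S + L) (-\<tau>) m' X"
    using holder_with_concat[OF S(1) hL S(2) L0] exponents_pos m tau by auto
  have xi: "\<And>x. x \<in> {-\<tau>..0} \<Longrightarrow> X x = \<xi> x" using X unfolding solves_upto_def by auto
  have "holder_with lam (A + (S + L) / 2) m m' X"
  proof (rule holder_withI)
    fix u v assume uv: "m \<le> u" "u \<le> v" "v \<le> m'"
    let ?Z = "T powr lam * h powr (gam - lam) + CY * h powr gam"
    have "\<bar>X v - X u\<bar> \<le> (A + (S + L) * M1 * Kb * ?Z) * (v - u) powr lam"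
      using young_integral_integrand_bound[OF xi hS add_nonneg_nonneg[OF S(2) L0], of u v h]
        solves_upto_increment[OF X, of u v] uv m aT unfolding A_def by simp
    also have "\<dots> \<le> (A + (S + L) / 2) * (v - u) powr lam"
    proof -
      have "(S + L) * (M1 * Kb * ?Z) \<le> (S + L) * (1/2)"
        using small S(2) L0 by (intro mult_left_mono) auto
      then show ?thesis by (intro mult_right_mono) (auto simp: mult.assoc)
    qed
    finally show "\<bar>X v - X u\<bar> \<le> (A + (S + L) / 2) * (v - u) powr lam" .
  qed
  then have "L \<le> A + (S + L) / 2" unfolding L_def by (rule holder_semi_le[OF m(2)])
  then have "S + L \<le> 2 * S + 2 * A" by (simp add: field_simps)
  then show ?thesis using holder_with_mono[OF hS] unfolding A_def by blast
qed

lemma solves_upto_holder_apriori: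
  obtains R where "0 \<le> R" "\<And>a X. 0 \<le> a \<Longrightarrow> a \<le> T \<Longrightarrow> solves_upto a X \<Longrightarrow> holder_with lam R (-\<tau>) a X"
proof -
  obtain h where h: "0 < h" "M1 * Kb * T powr lam * h powr (gam - lam) + M1 * Kb * CY * h powr gam < 1/2"
    using exists_small_powr_sum[of "1/2" "gam - lam" gam "M1 * Kb * T powr lam" "M1 * Kb * CY"] exponents_pos exponents
    by auto
  then have small: "M1 * Kb * (T powr lam * h powr (gam - lam) + CY * h powr gam) \<le> 1/2"
    by (simp add: algebra_simps)
  define A where "A = Kb * \<bar>integrand \<xi> 0\<bar> * h powr (gam - lam)"
  have A: "0 \<le> A" unfolding A_def using b_holder_with(2) by simp
  define \<Phi> where "\<Phi> k = 2 ^ k * (Kxi + 2 * A) - 2 * A" for k :: nat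
  have \<Phi>_Suc: "\<Phi> (Suc k) = 2 * \<Phi> k + 2 * A" for k unfolding \<Phi>_def by (simp add: algebra_simps)
  have \<Phi>_nonneg: "0 \<le> \<Phi> k" for k
    by (induction k) (use \<Phi>_Suc A xi_holder_with(2) in \<open>auto simp: \<Phi>_def\<close>)
  have step: "holder_with lam (\<Phi> k) (-\<tau>) (min a (real k * h)) X"
    if a: "0 \<le> a" "a \<le> T" and X: "solves_upto a X" for a X k
  proof (induction k)
    case 0
    have "holder_with lam Kxi (-\<tau>) 0 X"
      using X unfolding solves_upto_def by (intro holder_with_cong[OF xi_holder_with(1)]) auto
    then show ?case using a unfolding \<Phi>_def by simp
  next
    case (Suc k)
    have kh: "real k * h \<le> real (Suc k) * h" using h by (intro mult_right_mono) auto
    show ?case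
    proof (cases "min a (real k * h) < min a (real (Suc k) * h)")
      case False
      then have "min a (real (Suc k) * h) = min a (real k * h)" using kh by (auto simp: min_def split: if_splits)
      moreover have "\<Phi> k \<le> \<Phi> (Suc k)" using \<Phi>_Suc \<Phi>_nonneg[of k] A by simp
      ultimately show ?thesis using holder_with_mono[OF Suc] by simp
    next
      case True
      then have "min a (real k * h) = real k * h" "min a (real (Suc k) * h) - real k * h \<le> h"
        using kh by (auto simp: min_def algebra_simps split: if_splits)
      then show ?thesis
        using solves_upto_holder_step[OF X a(2) Suc \<Phi>_nonneg _ True _ _ small] a h
        unfolding \<Phi>_Suc A_def by auto
    qed
  qed
  obtain k :: nat where "T / h \<le> real k" using real_arch_simple by blast
  then have "T \<le> real k * h" using h by (simp add: divide_le_eq)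
  then show ?thesis using that[OF \<Phi>_nonneg[of k]] step[of _ _ k] by (simp add: min_def)
qed

definition integrand_lipschitz :: "real \<Rightarrow> real \<Rightarrow> bool" where
  "integrand_lipschitz R c \<longleftrightarrow> (\<forall>Z W K.
     holder_with lam R (-\<tau>) T Z \<longrightarrow> (\<forall>x\<in>{-\<tau>..0}. Z x = \<xi> x) \<longrightarrow>
     holder_with lam R (-\<tau>) T W \<longrightarrow> (\<forall>x\<in>{-\<tau>..0}. W x = \<xi> x) \<longrightarrow>
     holder_with lam K (-\<tau>) T (\<lambda>x. Z x - W x) \<longrightarrow> 0 \<le> K \<longrightarrow>
     holder_with lam (c * K) 0 T (\<lambda>s. integrand Z s - integrand W s))"

lemma exists_integrand_lipschitz:
  obtains c where "0 < c" "integrand_lipschitz R c"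
proof -
  define N where "N = nat \<lceil>R\<rceil> + 1"
  have N: "R \<le> real N" "1 \<le> N" unfolding N_def by linarith+
  obtain c where c: "c > 0" "\<forall>Z W. Z \<in> holder_rho lam \<tau> \<xi> 0 T \<and> W \<in> holder_rho lam \<tau> \<xi> 0 T \<and>
      max (holder_semi lam (0 - \<tau>) T Z) (holder_semi lam (0 - \<tau>) T W) \<le> real N \<longrightarrow>
      holder_semi lam 0 T (\<lambda>s. f (seg \<tau> Z s) - f (seg \<tau> W s)) \<le> c * holder_semi lam (0 - \<tau>) T (\<lambda>x. Z x - W x)"
    using f_local_lipschitz[OF N(2)] by blast
  have "holder_with lam (c * K) 0 T (\<lambda>s. integrand Z s - integrand W s)"
    if Z: "holder_with lam R (-\<tau>) T Z" "\<forall>x\<in>{-\<tau>..0}. Z x = \<xi> x"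
      and W: "holder_with lam R (-\<tau>) T W" "\<forall>x\<in>{-\<tau>..0}. W x = \<xi> x"
      and D: "holder_with lam K (-\<tau>) T (\<lambda>x. Z x - W x)" for Z W K
  proof -
    have lt: "-\<tau> < T" using tau T by simp
    have "Z \<in> holder_rho lam \<tau> \<xi> 0 T" "W \<in> holder_rho lam \<tau> \<xi> 0 T"
      unfolding holder_rho_def holder_on_iff_holder_with using Z W by auto
    moreover have "holder_semi lam (0 - \<tau>) T Z \<le> real N" "holder_semi lam (0 - \<tau>) T W \<le> real N"
      using holder_semi_le[OF lt Z(1)] holder_semi_le[OF lt W(1)] N by auto
    ultimately have "holder_semi lam 0 T (\<lambda>s. integrand Z s - integrand W s)
        \<le> c * holder_semi lam (0 - \<tau>) T (\<lambda>x. Z x - W x)"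
      using c(2) unfolding integrand_def by auto
    also have "\<dots> \<le> c * K" using holder_semi_le[OF lt D] c(1) by simp
    finally have "holder_semi lam 0 T (\<lambda>s. integrand Z s - integrand W s) \<le> c * K" .
    moreover have "holder_on lam 0 T (\<lambda>s. integrand Z s - integrand W s)"
      unfolding holder_on_iff_holder_with
      using holder_with_diff[OF integrand_holder[of R 0 T Z] integrand_holder[of R 0 T W]] Z W T by auto
    ultimately show ?thesis using holder_with_mono[OF holder_with_holder_semi] by blast
  qed
  then show ?thesis using that[OF c(1)] unfolding integrand_lipschitz_def by blast
qed

text \<open>The bound is small with \<open>a' - a\<close> because the two integrands agree at time \<open>a\<close>.\<close>

lemma young_integral_integrand_diff:
  assumes Z: "holder_with lam R (-\<tau>) T Z" and W: "holder_with lam R (-\<tau>) T W" and R: "0 \<le> R"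
    and G: "holder_with lam C 0 T (\<lambda>s. integrand Z s - integrand W s)" and C: "0 \<le> C"
    and ZW: "\<And>x. x \<in> {-\<tau>..a} \<Longrightarrow> Z x = W x"
    and pts: "0 \<le> a" "a \<le> u" "u \<le> v" "v \<le> a'" "a' \<le> T"
  shows "\<bar>young_integral (integrand Z) b u v - young_integral (integrand W) b u v\<bar>
    \<le> C * Kb * (1 + CY) * (a' - a) powr gam * (v - u) powr lam"
proof -
  let ?G = "\<lambda>s. integrand Z s - integrand W s"
  define h where "h = a' - a"
  define P where "P = (v - u) powr lam"
  have "has_young_integral ?G b u v (young_integral (integrand Z) b u v - young_integral (integrand W) b u v)"
    using pts
    by (intro has_young_integral_diff has_young_integral_integrand[OF Z R] has_young_integral_integrand[OF W R]) auto
  then have "\<bar>(young_integral (integrand Z) b u v - young_integral (integrand W) b u v) - ?G u * (b v - b u)\<bar>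
      \<le> CY * C * Kb * (v - u) powr (lam + gam)"
    using has_young_integral_estimate[OF _ holder_with_subinterval[OF G, of u v] b_holder_sub[of u v] C
        b_holder_with(2) exponents_pos] pts by auto
  then have est: "\<bar>young_integral (integrand Z) b u v - young_integral (integrand W) b u v\<bar>
      \<le> \<bar>?G u * (b v - b u)\<bar> + CY * C * Kb * (v - u) powr (lam + gam)"
    by linarith
  have "\<bar>?G u\<bar> \<le> C * h powr lam"
  proof -
    have "?G a = 0" using integrand_cong[of a Z W] ZW pts by auto
    then have "\<bar>?G u\<bar> \<le> C * \<bar>u - a\<bar> powr lam" using holder_withD[OF G, of u a] pts by auto
    also have "\<dots> \<le> C * h powr lam"
      unfolding h_def using pts C exponents_pos by (intro mult_left_mono powr_mono2) auto
    finally show ?thesis .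
  qed
  moreover have "\<bar>b v - b u\<bar> \<le> Kb * (P * h powr (gam - lam))"
  proof -
    have "\<bar>b v - b u\<bar> \<le> Kb * (v - u) powr gam" using holder_withD[OF b_holder_with(1), of v u] pts by auto
    also have "\<dots> \<le> Kb * (P * h powr (gam - lam))"
      using powr_le_mult_powr[of "v - u" h lam gam] pts exponents b_holder_with(2) unfolding h_def P_def
      by (intro mult_left_mono) auto
    finally show ?thesis .
  qed
  ultimately have "\<bar>?G u * (b v - b u)\<bar> \<le> (C * h powr lam) * (Kb * (P * h powr (gam - lam)))"
    unfolding abs_mult by (intro mult_mono) auto
  also have "(C * h powr lam) * (Kb * (P * h powr (gam - lam))) = C * Kb * P * (h powr lam * h powr (gam - lam))"
    by (simp only: mult_ac)
  also have "h powr lam * h powr (gam - lam) = h powr gam" by (simp add: powr_add[symmetric])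
  finally have "\<bar>?G u * (b v - b u)\<bar> \<le> C * Kb * P * h powr gam" .
  moreover have "CY * C * Kb * (v - u) powr (lam + gam) \<le> CY * C * Kb * (P * h powr gam)"
    using powr_le_mult_powr[of "v - u" h lam "lam + gam"] pts exponents_pos CY_nonneg C b_holder_with(2)
    unfolding h_def P_def by (intro mult_left_mono) auto
  ultimately have "\<bar>young_integral (integrand Z) b u v - young_integral (integrand W) b u v\<bar>
      \<le> C * Kb * P * h powr gam + CY * C * Kb * (P * h powr gam)"
    using est by linarith
  also have "\<dots> = C * Kb * (1 + CY) * h powr gam * P" by (simp add: algebra_simps)
  finally show ?thesis unfolding h_def P_def .
qed

lemma contraction_factor:
  assumes K: "0 \<le> K" and c: "0 < c" and a: "a \<le> a'" "a' - a \<le> h"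
    and small: "c * Kb * (1 + CY) * h powr gam \<le> 1/2" and d: "0 \<le> d"
  shows "c * K * Kb * (1 + CY) * (a' - a) powr gam * d \<le> K / 2 * d"
proof -
  have "c * Kb * (1 + CY) * (a' - a) powr gam \<le> c * Kb * (1 + CY) * h powr gam"
    using a exponents_pos c b_holder_with(2) CY_nonneg by (intro mult_left_mono powr_mono2) auto
  then have "K * (c * Kb * (1 + CY) * (a' - a) powr gam) \<le> K * (1 / 2)"
    using small K by (intro mult_left_mono) auto
  then show ?thesis using d by (intro mult_right_mono) (auto simp: algebra_simps)
qed

end

text \<open>Extension of a solution \<open>Xp\<close> from \<open>[-\<tau>, a]\<close> to \<open>[-\<tau>, a']\<close>: the choice of \<open>h\<close> makes the
  Picard map send the ball of admissible paths (radius \<open>1\<close> in the Hoelder seminorm on \<open>[a, a']\<close>)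
  into itself and contract by the factor \<open>1/2\<close>.\<close>

locale picard_step = delay_young_equation +
  fixes R c h a a' :: real and Xp :: "real \<Rightarrow> real"
  assumes Xp: "solves_upto a Xp" and Xp_holder: "holder_with lam R (-\<tau>) a Xp" and R: "0 \<le> R"
    and interval: "0 \<le> a" "a < a'" "a' \<le> T" "a' - a \<le> h"
    and lipschitz: "integrand_lipschitz (R + 1) c" and c: "0 < c"
    and small_growth: "Kb * \<bar>integrand \<xi> 0\<bar> * h powr (gam - lam)
      + (R + 1) * M1 * Kb * (T powr lam * h powr (gam - lam) + CY * h powr gam) \<le> 1"
    and small_contraction: "c * Kb * (1 + CY) * h powr gam \<le> 1/2"
begin

definition picard :: "(real \<Rightarrow> real) \<Rightarrow> real \<Rightarrow> real" where
  "picard Z t = (if t \<le> a then Xp t else Xp a + young_integral (integrand Z) b a (min t a'))"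

definition admissible :: "(real \<Rightarrow> real) \<Rightarrow> bool" where
  "admissible Z \<longleftrightarrow> (\<forall>x\<le>a. Z x = Xp x) \<and> (\<forall>x\<ge>a'. Z x = Z a') \<and> holder_with lam 1 a a' Z"

lemma admissibleD:
  assumes "admissible Z"
  shows "\<And>x. x \<le> a \<Longrightarrow> Z x = Xp x" "\<And>x. a' \<le> x \<Longrightarrow> Z x = Z a'" "holder_with lam 1 a a' Z"
  using assms unfolding admissible_def by blast+

lemma admissible_holder:
  assumes Z: "admissible Z"
  shows "holder_with lam (R + 1) (-\<tau>) T Z"
proof -
  have "holder_with lam R (-\<tau>) a Z" using admissibleD(1)[OF Z] by (intro holder_with_cong[OF Xp_holder]) auto
  then have "holder_with lam (R + 1) (-\<tau>) a' Z"
    by (rule holder_with_concat[OF _ admissibleD(3)[OF Z]]) (use R interval tau exponents_pos in auto)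
  moreover have "holder_with lam 0 a' T Z"
    by (rule holder_with_const[where C = "Z a'"]) (auto intro: admissibleD(2)[OF Z])
  ultimately have "holder_with lam (R + 1 + 0) (-\<tau>) T Z"
    by (rule holder_with_concat) (use R interval tau exponents_pos in auto)
  then show ?thesis by simp
qed

lemma admissible_initial: "admissible Z \<Longrightarrow> \<forall>x\<in>{-\<tau>..0}. Z x = \<xi> x"
  using Xp interval unfolding admissible_def solves_upto_def by auto

lemma picard_increment:
  assumes Z: "admissible Z" and uv: "a \<le> u" "u \<le> v" "v \<le> a'"
  shows "picard Z v - picard Z u = young_integral (integrand Z) b u v"
proof -
  have rep: "picard Z t = Xp a + young_integral (integrand Z) b a t" if "a \<le> t" "t \<le> a'" for t
    using that young_integral_trivial unfolding picard_def by (cases "t = a") auto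
  have "young_integral (integrand Z) b a v
      = young_integral (integrand Z) b a u + young_integral (integrand Z) b u v"
    using young_integral_integrand_additive[OF admissible_holder[OF Z], of a u v] R uv interval by auto
  then show ?thesis using rep[of u] rep[of v] uv by auto
qed

lemma admissible_picard:
  assumes Z: "admissible Z"
  shows "admissible (picard Z)"
proof -
  have "holder_with lam 1 a a' (picard Z)"
  proof (rule holder_withI)
    fix u v assume uv: "a \<le> u" "u \<le> v" "v \<le> a'"
    have "\<bar>picard Z v - picard Z u\<bar> \<le> (Kb * \<bar>integrand \<xi> 0\<bar> * h powr (gam - lam)
        + (R + 1) * M1 * Kb * (T powr lam * h powr (gam - lam) + CY * h powr gam)) * (v - u) powr lam"
      unfolding picard_increment[OF Z uv]
      using young_integral_integrand_bound[of Z "R + 1" T u v h] admissible_initial[OF Z] admissible_holder[OF Z]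
        R uv interval by auto
    also have "\<dots> \<le> 1 * (v - u) powr lam" using small_growth by (intro mult_right_mono) auto
    finally show "\<bar>picard Z v - picard Z u\<bar> \<le> 1 * (v - u) powr lam" .
  qed
  moreover have "\<forall>x\<le>a. picard Z x = Xp x" unfolding picard_def by simp
  moreover have "\<forall>x\<ge>a'. picard Z x = picard Z a'" unfolding picard_def using interval by auto
  ultimately show ?thesis unfolding admissible_def by blast
qed

lemma picard_contraction:
  assumes Z: "admissible Z" and W: "admissible W"
    and D: "holder_with lam K a a' (\<lambda>x. Z x - W x)" and K: "0 \<le> K"
  shows "holder_with lam (K / 2) a a' (\<lambda>x. picard Z x - picard W x)"
proof (rule holder_withI)
  fix u v assume uv: "a \<le> u" "u \<le> v" "v \<le> a'"
  have ZW: "\<And>x. x \<le> a \<Longrightarrow> Z x = W x" and ZW': "\<And>x. a' \<le> x \<Longrightarrow> Z x - W x = Z a' - W a'"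
    using admissibleD(1,2)[OF Z] admissibleD(1,2)[OF W] by metis+
  have left: "\<And>x. x \<in> {-\<tau>..a} \<Longrightarrow> Z x - W x = 0" using ZW by simp
  have right: "\<And>x. x \<in> {a'..T} \<Longrightarrow> Z x - W x = Z a' - W a'" by (intro ZW') simp
  have "holder_with lam K (-\<tau>) T (\<lambda>x. Z x - W x)"
    using holder_with_extend_constant[where D = "\<lambda>x. Z x - W x", OF D K _ left right] interval tau exponents_pos
    by simp
  then have G: "holder_with lam (c * K) 0 T (\<lambda>s. integrand Z s - integrand W s)"
    using lipschitz admissible_holder[OF Z] admissible_holder[OF W] admissible_initial[OF Z]
      admissible_initial[OF W] K unfolding integrand_lipschitz_def by auto
  have "\<bar>picard Z v - picard W v - (picard Z u - picard W u)\<bar>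
      = \<bar>young_integral (integrand Z) b u v - young_integral (integrand W) b u v\<bar>"
    using picard_increment[OF Z uv] picard_increment[OF W uv] by (simp add: algebra_simps)
  also have "\<dots> \<le> c * K * Kb * (1 + CY) * (a' - a) powr gam * (v - u) powr lam"
    using young_integral_integrand_diff[OF admissible_holder[OF Z] admissible_holder[OF W] _ G _ _, of a u v a']
      R c K ZW uv interval by auto
  also have "\<dots> \<le> K / 2 * (v - u) powr lam"
    using contraction_factor[OF K c _ _ small_contraction] interval by simp
  finally show "\<bar>picard Z v - picard W v - (picard Z u - picard W u)\<bar> \<le> K / 2 * (v - u) powr lam" .
qed

lemma picard_fixpoint:
  obtains Z where "admissible Z" "\<And>t. t \<in> {a..a'} \<Longrightarrow> picard Z t = Z t"
proof -
  define Zs where "Zs n = (picard ^^ n) (\<lambda>t. Xp (min t a))" for n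
  have Zs_Suc: "Zs (Suc n) = picard (Zs n)" for n unfolding Zs_def by simp
  have "admissible (Zs 0)"
  proof -
    have "holder_with lam 0 a a' (Zs 0)" unfolding Zs_def by (rule holder_with_const[where C = "Xp a"]) auto
    then show ?thesis unfolding admissible_def Zs_def using interval by (auto intro: holder_with_mono)
  qed
  then have adm: "admissible (Zs n)" for n by (induction n) (auto simp: Zs_Suc admissible_picard)
  have step: "holder_with lam (2 / 2 ^ n) a a' (\<lambda>x. Zs (Suc n) x - Zs n x)" for n
  proof (induction n)
    case 0
    show ?case using holder_with_diff[OF admissibleD(3)[OF adm] admissibleD(3)[OF adm]] by simp
  next
    case (Suc n)
    show ?case using picard_contraction[OF adm adm Suc] by (simp add: Zs_Suc)
  qed
  have fixed: "Zs n a = Zs 0 a" for n using admissibleD(1)[OF adm] by simp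
  define Z where "Z x = lim (\<lambda>n. Zs n x)" for x
  have conv: "(\<lambda>n. Zs n x) \<longlonglongrightarrow> Z x" if "x \<in> {a..a'}" for x
    unfolding Z_def using holder_geometric_limit(1)[OF step fixed _ that] by simp
  have rest: "holder_with lam (4 / 2 ^ n) a a' (\<lambda>x. Z x - Zs n x)" for n
    unfolding Z_def using holder_geometric_limit(2)[OF step fixed, of n] by simp
  have "admissible Z" unfolding admissible_def
  proof (intro conjI allI impI)
    show "Z x = Xp x" if "x \<le> a" for x unfolding Z_def using admissibleD(1)[OF adm that] by simp
    show "Z x = Z a'" if "a' \<le> x" for x unfolding Z_def using admissibleD(2)[OF adm that] by simp
    show "holder_with lam 1 a a' Z" using holder_with_limit[OF admissibleD(3)[OF adm] conv] .
  qed
  moreover have "picard Z t = Z t" if t: "t \<in> {a..a'}" for t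
  proof -
    have bound: "\<bar>picard Z t - Z t\<bar> \<le> 4 * \<bar>t - a\<bar> powr lam / 2 ^ n" for n
    proof -
      have "holder_with lam (4 / 2 ^ n / 2 + 4 / 2 ^ Suc n) a a' (\<lambda>x. picard Z x - Z x)"
        using holder_with_add[OF picard_contraction[OF \<open>admissible Z\<close> adm[of n] rest[of n]]
            holder_with_minus[OF rest[of "Suc n"]]]
        by (simp add: Zs_Suc)
      moreover have "picard Z a - Z a = 0" using admissibleD(1)[OF \<open>admissible Z\<close>] unfolding picard_def by simp
      ultimately show ?thesis using holder_withD[OF _ t, of _ _ _ a] interval by (fastforce simp: field_simps)
    qed
    have "(\<lambda>n. 4 * \<bar>t - a\<bar> powr lam / 2 ^ n) \<longlonglongrightarrow> 0" by (rule LIMSEQ_divide_realpow_zero) simp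
    then have "\<bar>picard Z t - Z t\<bar> \<le> 0" using bound by (intro LIMSEQ_le_const) auto
    then show ?thesis by simp
  qed
  ultimately show ?thesis using that by blast
qed

lemma solves_upto_extension: "\<exists>Y. solves_upto a' Y"
proof -
  obtain Z where Z: "admissible Z" and fixp: "\<And>t. t \<in> {a..a'} \<Longrightarrow> picard Z t = Z t"
    using picard_fixpoint by blast
  obtain K1 where K1: "0 \<le> K1" "\<And>u v. 0 \<le> u \<Longrightarrow> u \<le> v \<Longrightarrow> v \<le> a \<Longrightarrow>
      \<bar>Xp v - Xp u - integrand Xp u * (b v - b u)\<bar> \<le> K1 * (v - u) powr (lam + gam)"
    using Xp unfolding solves_upto_def by blast
  have hZ: "holder_with lam (R + 1) (-\<tau>) T Z" by (rule admissible_holder[OF Z])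
  have "\<bar>Z v - Z u - integrand Z u * (b v - b u)\<bar> \<le> K1 * (v - u) powr (lam + gam)"
    if "0 \<le> u" "u \<le> v" "v \<le> a" for u v
    using K1(2)[OF that] admissibleD(1)[OF Z] integrand_cong[of u Z Xp] that by auto
  moreover have "\<bar>Z v - Z u - integrand Z u * (b v - b u)\<bar> \<le> CY * (M1 * (R + 1)) * Kb * (v - u) powr (lam + gam)"
    if "a \<le> u" "u \<le> v" "v \<le> a'" for u v
    using young_integral_integrand_estimate[OF hZ, of u v] picard_increment[OF Z that] fixp[of u] fixp[of v]
      that R interval by auto
  ultimately have "\<bar>Z v - Z u - integrand Z u * (b v - b u)\<bar>
      \<le> (K1 + CY * (M1 * (R + 1)) * Kb + M1 * (R + 1) * Kb) * (v - u) powr (lam + gam)"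
    if "0 \<le> u" "u \<le> v" "v \<le> a'" for u v
    using remainder_concat[of 0 a Z "integrand Z" b K1 "lam + gam" a' _ lam "M1 * (R + 1)" gam Kb]
      integrand_holder[of "R + 1" 0 a' Z] holder_with_subinterval[OF hZ] b_holder_sub[of 0 a']
      K1(1) CY_nonneg M1 R b_holder_with(2) exponents_pos interval that
    by (simp add: mult_nonneg_nonneg)
  moreover have "0 \<le> K1 + CY * (M1 * (R + 1)) * Kb + M1 * (R + 1) * Kb"
    using K1(1) CY_nonneg M1 R b_holder_with(2) by simp
  moreover have "holder_with lam (R + 1) (-\<tau>) a' Z" using holder_with_subinterval[OF hZ] interval by auto
  ultimately have "solves_upto a' Z" unfolding solves_upto_def using admissible_initial[OF Z] by blast
  then show ?thesis by blast
qed

end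

context delay_young_equation
begin

lemma solves_upto_initial: "solves_upto 0 \<xi>"
proof -
  have "\<bar>\<xi> v - \<xi> u - integrand \<xi> u * (b v - b u)\<bar> \<le> 0 * (v - u) powr (lam + gam)"
    if "0 \<le> u" "u \<le> v" "v \<le> 0" for u v
  proof -
    have "u = 0" "v = 0" using that by auto
    then show ?thesis by simp
  qed
  then show ?thesis unfolding solves_upto_def using xi_holder_with(1) by blast
qed

lemma exists_step_size:
  obtains h where "0 < h"
    "Kb * \<bar>integrand \<xi> 0\<bar> * h powr (gam - lam) + R * M1 * Kb * (T powr lam * h powr (gam - lam) + CY * h powr gam) \<le> 1"
    "c * Kb * (1 + CY) * h powr gam \<le> 1/2"
proof -
  obtain h1 where h1: "0 < h1" "\<forall>h'. 0 < h' \<longrightarrow> h' \<le> h1 \<longrightarrow>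
      (Kb * \<bar>integrand \<xi> 0\<bar> + R * M1 * Kb * T powr lam) * h' powr (gam - lam) + R * M1 * Kb * CY * h' powr gam < 1"
    using exists_small_powr_sum[of 1 "gam - lam" gam "Kb * \<bar>integrand \<xi> 0\<bar> + R * M1 * Kb * T powr lam"
        "R * M1 * Kb * CY"] exponents by auto
  obtain h2 where h2: "0 < h2" "\<forall>h'. 0 < h' \<longrightarrow> h' \<le> h2 \<longrightarrow> c * Kb * (1 + CY) * h' powr gam < 1/2"
    using exists_small_powr[of "1/2" gam] exponents_pos by auto
  define h where "h = min h1 h2"
  have h: "0 < h" "h \<le> h1" "h \<le> h2" unfolding h_def using h1 h2 by auto
  have "(Kb * \<bar>integrand \<xi> 0\<bar> + R * M1 * Kb * T powr lam) * h powr (gam - lam) + R * M1 * Kb * CY * h powr gam < 1"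
    using h1(2) h by blast
  then have "Kb * \<bar>integrand \<xi> 0\<bar> * h powr (gam - lam) + R * M1 * Kb * (T powr lam * h powr (gam - lam) + CY * h powr gam) \<le> 1"
    by (simp add: algebra_simps)
  moreover have "c * Kb * (1 + CY) * h powr gam \<le> 1/2" using h2(2) h by (simp add: less_imp_le)
  ultimately show ?thesis using that h(1) by blast
qed

lemma solves_upto_exists: "\<exists>X. solves_upto T X"
proof -
  obtain R where R: "0 \<le> R" "\<And>a X. 0 \<le> a \<Longrightarrow> a \<le> T \<Longrightarrow> solves_upto a X \<Longrightarrow> holder_with lam R (-\<tau>) a X"
    using solves_upto_holder_apriori by blast
  obtain c where c: "0 < c" "integrand_lipschitz (R + 1) c" using exists_integrand_lipschitz by blast
  obtain h where h: "0 < h"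
    "Kb * \<bar>integrand \<xi> 0\<bar> * h powr (gam - lam) + (R + 1) * M1 * Kb * (T powr lam * h powr (gam - lam) + CY * h powr gam) \<le> 1"
    "c * Kb * (1 + CY) * h powr gam \<le> 1/2"
    by (rule exists_step_size)
  show ?thesis
  proof (rule real_induct_steps[OF h(1)])
    fix s assume s: "0 \<le> s" "s < T" and "\<exists>X. solves_upto s X"
    then obtain X where X: "solves_upto s X" by blast
    interpret step: picard_step \<tau> T lam gam M1 \<xi> b f R c h s "min (s + h) T" X
      using X R s c h by unfold_locales auto
    show "\<exists>Y. solves_upto (min (s + h) T) Y" by (rule step.solves_upto_extension)
  qed (use solves_upto_initial T in auto)
qed

text \<open>If two solutions agree up to \<open>s\<close>, the Hoelder seminorm \<open>L\<close> of their difference on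
  \<open>[s, s + h]\<close> satisfies \<open>L \<le> L / 2\<close>.\<close>

lemma solves_upto_agree_step:
  assumes X: "solves_upto T X" and Y: "solves_upto T Y"
    and hX: "holder_with lam R (-\<tau>) T X" and hY: "holder_with lam R (-\<tau>) T Y" and R: "0 \<le> R"
    and lip: "integrand_lipschitz R c" and c: "0 < c"
    and h: "0 < h" "c * Kb * (1 + CY) * h powr gam \<le> 1/2"
    and s: "0 \<le> s" "s < T" and agree: "\<And>x. x \<in> {-\<tau>..s} \<Longrightarrow> X x = Y x"
  shows "\<And>x. x \<in> {-\<tau>..min (s + h) T} \<Longrightarrow> X x = Y x"
proof -
  define a' where "a' = min (s + h) T"
  have a': "s < a'" "a' \<le> T" "a' - s \<le> h" unfolding a'_def using s h by auto
  define Z where "Z x = X (min x a')" for x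
  define W where "W x = Y (min x a')" for x
  define D where "D x = X x - Y x" for x
  have "holder_with lam R (-\<tau>) a' X" "holder_with lam R (-\<tau>) a' Y"
    using holder_with_subinterval[OF hX] holder_with_subinterval[OF hY] a' by auto
  then have hZ: "holder_with lam R (-\<tau>) T Z" and hW: "holder_with lam R (-\<tau>) T W"
    unfolding Z_def W_def using holder_with_stop[OF _ R] exponents_pos a' tau s by auto
  have xi: "\<forall>x\<in>{-\<tau>..0}. Z x = \<xi> x" "\<forall>x\<in>{-\<tau>..0}. W x = \<xi> x"
    using X Y a' s unfolding Z_def W_def solves_upto_def by (auto simp: min_def)
  have "holder_with lam (R + R) s a' D"
    unfolding D_def using holder_with_subinterval[OF holder_with_diff[OF hX hY]] a' tau s by auto
  then have hoD: "holder_on lam s a' D" unfolding holder_on_iff_holder_with by blast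
  define L where "L = holder_semi lam s a' D"
  have hL: "holder_with lam L s a' D" unfolding L_def by (rule holder_with_holder_semi[OF hoD])
  have L0: "0 \<le> L" unfolding L_def by (rule holder_semi_nonneg[OF a'(1) hoD])
  have ZW: "Z x = W x" if "x \<in> {-\<tau>..s}" for x
    using agree that a' unfolding Z_def W_def by (simp add: min_def)
  have hZW: "holder_with lam L s a' (\<lambda>x. Z x - W x)"
    by (rule holder_with_cong[OF hL]) (auto simp: Z_def W_def D_def)
  have left: "\<And>x. x \<in> {-\<tau>..s} \<Longrightarrow> Z x - W x = 0" using ZW by simp
  have right: "\<And>x. x \<in> {a'..T} \<Longrightarrow> Z x - W x = Z a' - W a'" by (simp add: Z_def W_def)
  have "holder_with lam L (-\<tau>) T (\<lambda>x. Z x - W x)"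
    using holder_with_extend_constant[where D = "\<lambda>x. Z x - W x", OF hZW L0 _ left right] a' tau s exponents_pos
    by simp
  then have G: "holder_with lam (c * L) 0 T (\<lambda>u. integrand Z u - integrand W u)"
    using lip hZ hW xi L0 unfolding integrand_lipschitz_def by blast
  have "holder_with lam (L / 2) s a' D"
  proof (rule holder_withI)
    fix u v assume uv: "s \<le> u" "u \<le> v" "v \<le> a'"
    have "integrand X y = integrand Z y" "integrand Y y = integrand W y" if "y \<le> a'" for y
      using that by (auto intro!: integrand_cong simp: Z_def W_def min_def)
    then have "D v - D u = young_integral (integrand Z) b u v - young_integral (integrand W) b u v"
      using solves_upto_increment[OF X, of u v] solves_upto_increment[OF Y, of u v] uv s a'
        young_integral_cong[of u v "integrand X" "integrand Z" b]
        young_integral_cong[of u v "integrand Y" "integrand W" b]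
      unfolding D_def by auto
    also have "\<bar>\<dots>\<bar> \<le> c * L * Kb * (1 + CY) * (a' - s) powr gam * (v - u) powr lam"
      using young_integral_integrand_diff[OF hZ hW R G, where a = s and u = u and v = v and a' = a'] ZW L0 c uv s a'
      by auto
    also have "\<dots> \<le> L / 2 * (v - u) powr lam" using contraction_factor[OF L0 c _ _ h(2)] a' by simp
    finally show "\<bar>D v - D u\<bar> \<le> L / 2 * (v - u) powr lam" .
  qed
  then have "D x = D s" if "x \<in> {s..a'}" for x
    using holder_with_half_semi_const[OF a'(1) hoD _ that] unfolding L_def by blast
  moreover have "D s = 0" using agree s tau unfolding D_def by auto
  ultimately show "X x = Y x" if "x \<in> {-\<tau>..min (s + h) T}" for x
    using agree that unfolding D_def a'_def by (cases "x \<le> s") auto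
qed

lemma solves_upto_unique:
  assumes X: "solves_upto T X" and Y: "solves_upto T Y"
  shows "\<forall>x\<in>{-\<tau>..T}. X x = Y x"
proof -
  obtain R where R: "0 \<le> R" "\<And>a X. 0 \<le> a \<Longrightarrow> a \<le> T \<Longrightarrow> solves_upto a X \<Longrightarrow> holder_with lam R (-\<tau>) a X"
    using solves_upto_holder_apriori by blast
  obtain c where c: "0 < c" "integrand_lipschitz R c" using exists_integrand_lipschitz by blast
  obtain h where h: "0 < h" "c * Kb * (1 + CY) * h powr gam \<le> 1/2" using exists_step_size by blast
  have hX: "holder_with lam R (-\<tau>) T X" and hY: "holder_with lam R (-\<tau>) T Y" using R X Y T by auto
  show ?thesis
  proof (rule real_induct_steps[OF h(1)])
    show "\<forall>x\<in>{-\<tau>..0}. X x = Y x" using X Y unfolding solves_upto_def by auto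
    show "\<forall>x\<in>{-\<tau>..min (s + h) T}. X x = Y x" if "0 \<le> s" "s < T" "\<forall>x\<in>{-\<tau>..s}. X x = Y x" for s
      using solves_upto_agree_step[OF X Y hX hY R(1) c(2) c(1) h] that by blast
  qed (use T in auto)
qed

lemma is_solution_iff_solves_upto: "is_solution lam \<tau> T f \<xi> b X \<longleftrightarrow> solves_upto T X"
proof
  assume sol: "is_solution lam \<tau> T f \<xi> b X"
  then have ho: "holder_on lam (-\<tau>) T X" and xi: "\<forall>x\<in>{-\<tau>..0}. X x = \<xi> x"
    unfolding is_solution_def holder_rho_def by auto
  obtain K where K: "0 \<le> K" "holder_with lam K (-\<tau>) T X" using holder_on_obtain_nonneg[OF ho] by blast
  have int: "has_young_integral (integrand X) b 0 t (X t - \<xi> 0)" if "t \<in> {0..T}" for t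
    using sol that unfolding is_solution_def integrand_def by blast
  have "\<bar>X v - X u - integrand X u * (b v - b u)\<bar> \<le> CY * (M1 * K) * Kb * (v - u) powr (lam + gam)"
    if uv: "0 \<le> u" "u \<le> v" "v \<le> T" for u v
  proof -
    have "X v - \<xi> 0 = (X u - \<xi> 0) + young_integral (integrand X) b u v"
      using has_young_integral_additive[OF int[of u] has_young_integral_integrand[OF K(2) K(1)] int[of v]] uv
      by auto
    then show ?thesis using young_integral_integrand_estimate[OF K(2) K(1), of u v] uv by simp
  qed
  moreover have "0 \<le> CY * (M1 * K) * Kb" using CY_nonneg M1 K(1) b_holder_with(2) by simp
  ultimately show "solves_upto T X" unfolding solves_upto_def using K(2) xi by blast
next
  assume X: "solves_upto T X"
  then obtain K where K: "\<forall>u v. 0 \<le> u \<longrightarrow> u \<le> v \<longrightarrow> v \<le> T \<longrightarrow>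
      \<bar>X v - X u - integrand X u * (b v - b u)\<bar> \<le> K * (v - u) powr (lam + gam)"
    unfolding solves_upto_def by blast
  have "has_young_integral (integrand X) b 0 t (X t - X 0)" if "t \<in> {0..T}" for t
    using that K by (intro sewing_lemma[OF exponents_pos(3), where K = K]) auto
  moreover have "X 0 = \<xi> 0" using X tau unfolding solves_upto_def by auto
  moreover have "X \<in> holder_rho lam \<tau> \<xi> 0 T"
    using X unfolding solves_upto_def holder_rho_def holder_on_iff_holder_with by auto
  ultimately show "is_solution lam \<tau> T f \<xi> b X" unfolding is_solution_def integrand_def by auto
qed

lemma solves_upto_remainder:
  assumes "solves_upto T X"
  shows "\<exists>C>0. \<forall>s t. 0 \<le> s \<and> s \<le> t \<and> t \<le> T \<longrightarrow>
    \<bar>X t - X s - f (seg \<tau> X s) * (b t - b s)\<bar> \<le> C * \<bar>t - s\<bar> powr (2 * lam)"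
proof -
  obtain K where K: "0 \<le> K" "\<forall>u v. 0 \<le> u \<longrightarrow> u \<le> v \<longrightarrow> v \<le> T \<longrightarrow>
      \<bar>X v - X u - integrand X u * (b v - b u)\<bar> \<le> K * (v - u) powr (lam + gam)"
    using assms unfolding solves_upto_def by blast
  have "\<bar>X t - X s - f (seg \<tau> X s) * (b t - b s)\<bar> \<le> (K * T powr (gam - lam) + 1) * \<bar>t - s\<bar> powr (2 * lam)"
    if st: "0 \<le> s" "s \<le> t" "t \<le> T" for s t
  proof -
    have "\<bar>X t - X s - f (seg \<tau> X s) * (b t - b s)\<bar> \<le> K * (t - s) powr (lam + gam)"
      using K(2) st unfolding integrand_def by auto
    also have "\<dots> \<le> K * ((t - s) powr (2 * lam) * T powr (gam - lam))"
      using powr_le_mult_powr[of "t - s" T "2 * lam" "lam + gam"] st exponents K(1)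
      by (intro mult_left_mono) (auto simp: algebra_simps)
    also have "\<dots> \<le> (K * T powr (gam - lam) + 1) * \<bar>t - s\<bar> powr (2 * lam)"
      using st by (simp add: algebra_simps)
    finally show ?thesis .
  qed
  moreover have "0 < K * T powr (gam - lam) + 1" using K(1) by (simp add: add_nonneg_pos)
  ultimately show ?thesis by blast
qed

theorem exists_unique_solution:
  "\<exists>X. is_solution lam \<tau> T f \<xi> b X
     \<and> (\<forall>Y. is_solution lam \<tau> T f \<xi> b Y \<longrightarrow> (\<forall>t\<in>{-\<tau>..T}. Y t = X t))
     \<and> (\<exists>C>0. \<forall>s t. 0 \<le> s \<and> s \<le> t \<and> t \<le> T \<longrightarrow>
          \<bar>X t - X s - f (seg \<tau> X s) * (b t - b s)\<bar> \<le> C * \<bar>t - s\<bar> powr (2 * lam))"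
proof -
  obtain X where X: "solves_upto T X" using solves_upto_exists by blast
  then show ?thesis
    using solves_upto_unique[of _ X] solves_upto_remainder[OF X] is_solution_iff_solves_upto by blast
qed

end

theorem theorem1:
  fixes M :: "'a measure" and B :: "'a \<Rightarrow> real \<Rightarrow> real"
    and T \<tau> H lam :: real and \<xi> :: "real \<Rightarrow> real" and f :: "(real \<Rightarrow> real) \<Rightarrow> real"
  assumes T: "T > 0" and tau: "\<tau> > 0" and H: "1/2 < H" "H < 1"
    and prob: "prob_space M" and compl: "complete_measure M"
    and fbm: "is_fbm M H T B"
    and lam: "1/2 < lam" "lam < H"
    and xi: "holder_on lam (-\<tau>) 0 \<xi>"
    and A: "\<exists>M1>0. \<forall>\<psi>1 \<psi>2. holder_on lam (-\<tau>) 0 \<psi>1 \<longrightarrow> holder_on lam (-\<tau>) 0 \<psi>2 \<longrightarrow>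
              \<bar>f \<psi>2 - f \<psi>1\<bar> \<le> M1 * sup_norm (-\<tau>) 0 (\<lambda>x. \<psi>2 x - \<psi>1 x)"
    and Bcond: "\<forall>a1 a2. 0 \<le> a1 \<and> a1 < a2 \<and> a2 \<le> T \<longrightarrow>
              (\<forall>\<rho>. holder_on lam (a1 - \<tau>) a1 \<rho> \<longrightarrow>
                (\<forall>N::nat. N \<ge> 1 \<longrightarrow> (\<exists>c>0. \<forall>Z W.
                   Z \<in> holder_rho lam \<tau> \<rho> a1 a2 \<and> W \<in> holder_rho lam \<tau> \<rho> a1 a2 \<and>
                   max (holder_semi lam (a1 - \<tau>) a2 Z) (holder_semi lam (a1 - \<tau>) a2 W) \<le> real N \<longrightarrow>
                   holder_semi lam a1 a2 (\<lambda>s. f (seg \<tau> Z s) - f (seg \<tau> W s))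
                     \<le> c * holder_semi lam (a1 - \<tau>) a2 (\<lambda>x. Z x - W x))))"
  shows "\<forall>\<omega>\<in>space M. (\<exists>\<gamma>. lam < \<gamma> \<and> \<gamma> < H \<and> holder_on \<gamma> 0 T (B \<omega>)) \<longrightarrow>
           (\<exists>X. is_solution lam \<tau> T f \<xi> (B \<omega>) X
              \<and> (\<forall>Y. is_solution lam \<tau> T f \<xi> (B \<omega>) Y \<longrightarrow> (\<forall>t\<in>{-\<tau>..T}. Y t = X t))
              \<and> (\<exists>C>0. \<forall>s t. 0 \<le> s \<and> s \<le> t \<and> t \<le> T \<longrightarrow>
                   \<bar>X t - X s - f (seg \<tau> X s) * (B \<omega> t - B \<omega> s)\<bar> \<le> C * \<bar>t - s\<bar> powr (2 * lam)))"
proof -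
  have "\<exists>M1. delay_young_equation \<tau> T lam \<gamma> M1 \<xi> (B \<omega>) f"
    if "lam < \<gamma>" "holder_on \<gamma> 0 T (B \<omega>)" for \<omega> \<gamma>
  proof -
    obtain M1 where "0 < M1" "\<forall>\<psi>1 \<psi>2. holder_on lam (-\<tau>) 0 \<psi>1 \<longrightarrow> holder_on lam (-\<tau>) 0 \<psi>2 \<longrightarrow>
        \<bar>f \<psi>2 - f \<psi>1\<bar> \<le> M1 * sup_norm (-\<tau>) 0 (\<lambda>x. \<psi>2 x - \<psi>1 x)"
      using A by blast
    then show ?thesis
      using that T tau lam xi Bcond[rule_format, of 0 T \<xi>] by (intro exI[of _ M1], unfold_locales) auto
  qed
  then show ?thesis using delay_young_equation.exists_unique_solution by blast
qed

end
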